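(* Let $n=1$, $\Omega=(0,3)$, $\mu=\chi_{(1,2)}$, $c=\chi_{(2,3)}$, $h=0$, and consider for $\lambda\in\mathbb{R}$ the problem $-u''=\mu(x)|u'|^2+\lambda c(x)u$ in $(0,3)$, $u\in H^1_0(0,3)\cap L^\infty(0,3)$ (in the weak sense with test functions in $H^1_0(0,3)\cap L^\infty(0,3)$). There exist a sequence $\lambda_j\to\pi^2/4$ and a sequence $u_j\in H^2(0,3)\cap H^1_0(0,3)$ such that each $u_j$ is a solution of this problem with $\lambda=\lambda_j$ and $\|u_j\|_\infty\to\infty$ as $j\to\infty$.
   Context: $\chi_A$ denotes the indicator function of the set $A$. *)

theory Defs
  imports "HOL-Analysis.Analysis" "HOL-Probability.Essential_Supremum"
begin

definition intv :: "real \<Rightarrow> real \<Rightarrow> real measure" where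
  "intv a b = restrict_space lborel {a<..<b}"

definition test_fun :: "real \<Rightarrow> real \<Rightarrow> (real \<Rightarrow> real) \<Rightarrow> bool" where
  "test_fun a b \<phi> \<longleftrightarrow>
     (\<forall>k x. (deriv ^^ k) \<phi> differentiable (at x)) \<and>
     (\<exists>K. compact K \<and> K \<subseteq> {a<..<b} \<and> (\<forall>x. x \<notin> K \<longrightarrow> \<phi> x = 0))"

definition L2 :: "real \<Rightarrow> real \<Rightarrow> (real \<Rightarrow> real) \<Rightarrow> bool" where
  "L2 a b f \<longleftrightarrow> f \<in> borel_measurable (intv a b) \<and> integrable (intv a b) (\<lambda>x. (f x)\<^sup>2)"

definition Linf_norm :: "real \<Rightarrow> real \<Rightarrow> (real \<Rightarrow> real) \<Rightarrow> ereal" where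
  "Linf_norm a b f = esssup (intv a b) (\<lambda>x. ereal \<bar>f x\<bar>)"

definition Linf :: "real \<Rightarrow> real \<Rightarrow> (real \<Rightarrow> real) \<Rightarrow> bool" where
  "Linf a b f \<longleftrightarrow> f \<in> borel_measurable (intv a b) \<and> Linf_norm a b f < \<infinity>"

text \<open>g is a weak derivative of u on (a,b) (u, g locally integrable, here: integrable).\<close>
definition weak_deriv :: "real \<Rightarrow> real \<Rightarrow> (real \<Rightarrow> real) \<Rightarrow> (real \<Rightarrow> real) \<Rightarrow> bool" where
  "weak_deriv a b u g \<longleftrightarrow>
     integrable (intv a b) u \<and> integrable (intv a b) g \<and>
     (\<forall>\<phi>. test_fun a b \<phi> \<longrightarrow>
        (\<integral>x. u x * deriv \<phi> x \<partial>intv a b) = - (\<integral>x. g x * \<phi> x \<partial>intv a b))"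

definition H1 :: "real \<Rightarrow> real \<Rightarrow> (real \<Rightarrow> real) \<Rightarrow> bool" where
  "H1 a b u \<longleftrightarrow> L2 a b u \<and> (\<exists>g. L2 a b g \<and> weak_deriv a b u g)"

definition H2 :: "real \<Rightarrow> real \<Rightarrow> (real \<Rightarrow> real) \<Rightarrow> bool" where
  "H2 a b u \<longleftrightarrow> L2 a b u \<and> (\<exists>g. H1 a b g \<and> weak_deriv a b u g)"

definition H10 :: "real \<Rightarrow> real \<Rightarrow> (real \<Rightarrow> real) \<Rightarrow> bool" where
  "H10 a b u \<longleftrightarrow> L2 a b u \<and> (\<exists>g. L2 a b g \<and> weak_deriv a b u g \<and>
     (\<exists>\<phi>::nat \<Rightarrow> real \<Rightarrow> real. (\<forall>k. test_fun a b (\<phi> k)) \<and>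
        ((\<lambda>k. \<integral>x. (\<phi> k x - u x)\<^sup>2 \<partial>intv a b) \<longlonglongrightarrow> 0) \<and>
        ((\<lambda>k. \<integral>x. (deriv (\<phi> k) x - g x)\<^sup>2 \<partial>intv a b) \<longlonglongrightarrow> 0)))"

definition weak_sol ::
  "real \<Rightarrow> real \<Rightarrow> (real \<Rightarrow> real) \<Rightarrow> (real \<Rightarrow> real) \<Rightarrow> real \<Rightarrow> (real \<Rightarrow> real) \<Rightarrow> bool" where
  "weak_sol a b \<mu> c lam u \<longleftrightarrow> H10 a b u \<and> Linf a b u \<and>
     (\<exists>u'. weak_deriv a b u u' \<and> L2 a b u' \<and>
       (\<forall>\<phi> \<phi>'. H10 a b \<phi> \<and> Linf a b \<phi> \<and> weak_deriv a b \<phi> \<phi>' \<and> L2 a b \<phi>' \<longrightarrow>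
          (\<integral>x. u' x * \<phi>' x \<partial>intv a b) =
          (\<integral>x. \<mu> x * (u' x)\<^sup>2 * \<phi> x \<partial>intv a b) + lam * (\<integral>x. c x * u x * \<phi> x \<partial>intv a b)))"

end

theory Submission
  imports Defs "HOL-Computational_Algebra.Polynomial"
begin

text \<open>For \<open>a \<ge> 1\<close> the function equal to \<open>a x\<close> on \<open>[0,1]\<close>, to \<open>a + ln (1 + a (x - 1))\<close> on
  \<open>[1,2]\<close> (where \<open>-u'' = u'\<^sup>2\<close>) and to \<open>B sin (s (3 - x))\<close> on \<open>[2,3]\<close> (where
  \<open>-u'' = s\<^sup>2 u\<close>) is \<open>C\<^sup>1\<close> as soon as \<open>B sin s = a + ln (1 + a)\<close> and
  \<open>- B s cos s = a / (1 + a)\<close>. Eliminating \<open>B\<close> gives \<open>s cos s + r sin s = 0\<close> with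
  \<open>r = a / ((1 + a) (a + ln (1 + a))) \<rightarrow> 0\<close>, so the root \<open>s\<close> in \<open>[pi/2, pi)\<close> tends to
  \<open>pi/2\<close> as \<open>a \<rightarrow> \<infinity>\<close>: the eigenvalue parameter \<open>s\<^sup>2\<close> tends to \<open>pi\<^sup>2/4\<close> while the
  sup norm is at least \<open>a\<close>.

  Being piecewise smooth and \<open>C\<^sup>1\<close>, \<open>u\<close> lies in \<open>H\<^sup>2\<close>. Smoothing its two corners and cutting
  it off near the end points gives test functions converging to \<open>u\<close> in \<open>H\<^sup>1\<close>, so
  \<open>u \<in> H\<^sup>1\<^sub>0\<close>; the same density argument extends \<open>\<integral> u' \<phi>' = - \<integral> u'' \<phi>\<close> from test
  functions to all \<open>\<phi> \<in> H\<^sup>1\<^sub>0\<close>.\<close>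

section \<open>Functions of class \<open>C\<^sup>k\<close> on an open set\<close>

fun k_diff_on :: "real set \<Rightarrow> nat \<Rightarrow> (real \<Rightarrow> real) \<Rightarrow> bool" where
  "k_diff_on U 0 f = True"
| "k_diff_on U (Suc k) f = ((\<forall>x\<in>U. f differentiable (at x)) \<and> k_diff_on U k (deriv f))"

lemma k_diff_on_Suc_imp: "k_diff_on U (Suc k) f \<Longrightarrow> k_diff_on U k f"
  by (induction k arbitrary: f) auto

lemma k_diff_on_subset: "k_diff_on U k f \<Longrightarrow> V \<subseteq> U \<Longrightarrow> k_diff_on V k f"
  by (induction k arbitrary: f) auto

lemma k_diff_on_Un: "k_diff_on U k f \<Longrightarrow> k_diff_on V k f \<Longrightarrow> k_diff_on (U \<union> V) k f"
  by (induction k arbitrary: f) auto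

lemma real_differentiable_DERIV_deriv: "(f::real\<Rightarrow>real) differentiable (at x) \<Longrightarrow> DERIV f x :> deriv f x"
  by (simp add: DERIV_deriv_iff_real_differentiable)

lemma deriv_cong_open:
  assumes "open U" "x \<in> U" "\<And>y. y \<in> U \<Longrightarrow> f y = g y"
  shows "deriv f x = deriv g x"
proof (rule deriv_cong_ev)
  show "\<forall>\<^sub>F y in nhds x. f y = g y"
    using eventually_nhds_in_open[OF assms(1,2)] by eventually_elim (rule assms(3))
qed simp

lemma differentiable_cong_open:
  fixes f g :: "real \<Rightarrow> real"
  assumes "open U" "x \<in> U" "\<And>y. y \<in> U \<Longrightarrow> f y = g y" "f differentiable (at x)"
  shows "g differentiable (at x)"
  using assms has_field_derivative_transform_within_open[of f _ x U g]
  by (metis real_differentiable_def)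

lemma k_diff_on_cong:
  assumes "open U" "\<And>x. x \<in> U \<Longrightarrow> f x = g x"
  shows "k_diff_on U k f = k_diff_on U k g"
  using assms(2)
proof (induction k arbitrary: f g)
  case (Suc k)
  have "deriv f x = deriv g x" if "x \<in> U" for x
    using deriv_cong_open[OF assms(1) that] Suc.prems by blast
  then have "k_diff_on U k (deriv f) = k_diff_on U k (deriv g)" by (rule Suc.IH)
  moreover have "(\<forall>x\<in>U. f differentiable (at x)) = (\<forall>x\<in>U. g differentiable (at x))"
    using differentiable_cong_open[OF assms(1)] Suc.prems by metis
  ultimately show ?case by simp
qed simp

lemma k_diff_on_SucI:
  assumes "open U" "\<And>x. x \<in> U \<Longrightarrow> DERIV f x :> f' x" "k_diff_on U k f'"
  shows "k_diff_on U (Suc k) f"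
proof -
  have "k_diff_on U k (deriv f)"
    using assms(3) k_diff_on_cong[OF assms(1), of "deriv f" f'] DERIV_imp_deriv[OF assms(2)] by simp
  moreover have "\<forall>x\<in>U. f differentiable (at x)" using assms(2) real_differentiable_def by blast
  ultimately show ?thesis by simp
qed

lemma k_diff_on_DERIV:
  "k_diff_on U (Suc k) f \<Longrightarrow> x \<in> U \<Longrightarrow> DERIV f x :> deriv f x"
  by (simp add: real_differentiable_DERIV_deriv)

lemma k_diff_on_const: "k_diff_on U k (\<lambda>x. c)"
proof (induction k arbitrary: c)
  case (Suc k)
  have "deriv (\<lambda>x. c) = (\<lambda>x. 0)" by (rule ext) (rule DERIV_imp_deriv, auto)
  then show ?case using Suc by simp
qed simp

lemma k_diff_on_add:
  assumes "open U"
  shows "k_diff_on U k f \<Longrightarrow> k_diff_on U k g \<Longrightarrow> k_diff_on U k (\<lambda>x. f x + g x)"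
proof (induction k arbitrary: f g)
  case (Suc k)
  show ?case
    by (rule k_diff_on_SucI[OF assms, where f'="\<lambda>x. deriv f x + deriv g x"])
      (use Suc k_diff_on_DERIV in \<open>auto intro: DERIV_add\<close>)
qed simp

lemma k_diff_on_mult:
  assumes "open U"
  shows "k_diff_on U k f \<Longrightarrow> k_diff_on U k g \<Longrightarrow> k_diff_on U k (\<lambda>x. f x * g x)"
proof (induction k arbitrary: f g)
  case (Suc k)
  have "k_diff_on U k (\<lambda>x. deriv f x * g x + deriv g x * f x)"
    using Suc k_diff_on_Suc_imp by (intro k_diff_on_add assms) auto
  then show ?case
    by (rule k_diff_on_SucI[OF assms, rotated]) (use Suc k_diff_on_DERIV in \<open>auto intro: DERIV_mult\<close>)
qed simp

lemma k_diff_on_cmult: "open U \<Longrightarrow> k_diff_on U k f \<Longrightarrow> k_diff_on U k (\<lambda>x. c * f x)"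
  using k_diff_on_mult[OF _ k_diff_on_const] by blast

lemma k_diff_on_diff: "open U \<Longrightarrow> k_diff_on U k f \<Longrightarrow> k_diff_on U k g \<Longrightarrow> k_diff_on U k (\<lambda>x. f x - g x)"
  using k_diff_on_add[of U k f "\<lambda>x. (-1) * g x"] k_diff_on_cmult[of U k g "-1"] by simp

lemma k_diff_on_ident: "k_diff_on U k (\<lambda>x. x)"
proof (cases k)
  case (Suc j)
  have "deriv (\<lambda>x. x) = (\<lambda>x. 1)" by (rule ext) (rule DERIV_imp_deriv, auto)
  then show ?thesis using Suc k_diff_on_const by simp
qed simp

lemma k_diff_on_inverse:
  assumes "open U" "k_diff_on U k g" "\<And>x. x \<in> U \<Longrightarrow> g x \<noteq> 0"
  shows "k_diff_on U k (\<lambda>x. inverse (g x))"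
  using assms(2)
proof (induction k)
  case (Suc k)
  have "k_diff_on U k (\<lambda>x. (- 1) * deriv g x * (inverse (g x) * inverse (g x)))"
    using Suc k_diff_on_Suc_imp by (intro k_diff_on_mult k_diff_on_const assms(1)) auto
  moreover have "DERIV (\<lambda>x. inverse (g x)) x :> (- 1) * deriv g x * (inverse (g x) * inverse (g x))"
    if "x \<in> U" for x
    using DERIV_inverse_fun[OF k_diff_on_DERIV[OF Suc.prems that] assms(3)[OF that]] by simp
  ultimately show ?case by (rule k_diff_on_SucI[OF assms(1), rotated])
qed simp

lemma k_diff_on_affine:
  assumes "open U" "k_diff_on U k f"
  shows "k_diff_on {x. \<alpha> * x + \<beta> \<in> U} k (\<lambda>x. f (\<alpha> * x + \<beta>))"
  using assms(2)
proof (induction k arbitrary: f)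
  case (Suc k)
  have "open {x. \<alpha> * x + \<beta> \<in> U}"
    using assms(1) by (intro continuous_open_vimage[unfolded vimage_def]) (auto intro!: continuous_intros)
  moreover have "DERIV (\<lambda>x. f (\<alpha> * x + \<beta>)) x :> \<alpha> * deriv f (\<alpha> * x + \<beta>)" if "x \<in> {x. \<alpha> * x + \<beta> \<in> U}" for x
  proof -
    have "DERIV (\<lambda>x. \<alpha> * x + \<beta>) x :> \<alpha>" by (auto intro!: derivative_eq_intros)
    from DERIV_chain2[OF k_diff_on_DERIV[OF Suc.prems] this] that show ?thesis by (simp add: mult.commute)
  qed
  moreover have "k_diff_on {x. \<alpha> * x + \<beta> \<in> U} k (\<lambda>x. \<alpha> * deriv f (\<alpha> * x + \<beta>))"
    using Suc.IH[of "deriv f"] Suc.prems calculation(1) by (intro k_diff_on_cmult) auto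
  ultimately show ?case by (rule k_diff_on_SucI)
qed simp

lemma k_diff_on_sin_cos: "k_diff_on UNIV k sin \<and> k_diff_on UNIV k cos"
proof (induction k)
  case (Suc k)
  have D: "DERIV sin x :> cos x" "DERIV cos x :> (- 1) * sin x" for x :: real
    by (auto intro!: derivative_eq_intros)
  have "k_diff_on UNIV (Suc k) sin"
    by (rule k_diff_on_SucI[OF open_UNIV, where f'=cos]) (use D Suc in auto)
  moreover have "k_diff_on UNIV (Suc k) cos"
    by (rule k_diff_on_SucI[OF open_UNIV, where f'="\<lambda>x. (- 1) * sin x"])
      (use D Suc k_diff_on_cmult[of UNIV k sin "- 1"] in auto)
  ultimately show ?case ..
qed simp

lemma k_diff_on_inverse_power: "k_diff_on {0<..} k (\<lambda>x. inverse x ^ n)"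
proof (induction k arbitrary: n)
  case (Suc k)
  have "DERIV (\<lambda>x. inverse x ^ n) x :> (- real n) * inverse x ^ (Suc n)" if "x \<in> {0<..}" for x
  proof -
    have i: "DERIV inverse x :> - (inverse x ^ 2)"
      using DERIV_inverse[of x] that by (simp add: numeral_2_eq_2)
    have "DERIV (\<lambda>x. inverse x ^ n) x :> real n * inverse x ^ (n - 1) * (- (inverse x ^ 2))"
      using DERIV_chain2[OF DERIV_pow i] by simp
    moreover have "real n * inverse x ^ (n - 1) * (- (inverse x ^ 2)) = (- real n) * inverse x ^ (Suc n)"
      by (cases n) (auto simp: power2_eq_square algebra_simps)
    ultimately show ?thesis by (simp only:)
  qed
  then show ?case by (rule k_diff_on_SucI[OF open_greaterThan _ k_diff_on_cmult[OF open_greaterThan Suc.IH]])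
qed simp

lemma k_diff_on_ln: "k_diff_on {0<..} k ln"
proof (cases k)
  case (Suc j)
  have "DERIV ln x :> inverse x ^ 1" if "x \<in> {0<..}" for x :: real
    using that DERIV_ln by auto
  then show ?thesis unfolding Suc by (rule k_diff_on_SucI[OF open_greaterThan _ k_diff_on_inverse_power])
qed simp

lemma k_diff_on_higher_deriv_differentiable:
  "k_diff_on U (Suc k) f \<Longrightarrow> j \<le> k \<Longrightarrow> x \<in> U \<Longrightarrow> (deriv ^^ j) f differentiable (at x)"
proof (induction k arbitrary: f j)
  case 0 then show ?case by simp
next
  case (Suc k)
  show ?case
  proof (cases j)
    case 0 then show ?thesis using Suc.prems by simp
  next
    case (Suc i)
    then show ?thesis using Suc.IH[of "deriv f" i] Suc.prems by (simp add: funpow_Suc_right del: funpow.simps)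
  qed
qed


section \<open>A smooth step function\<close>

text \<open>The derivative of \<open>P(1/x) exp(-1/x)\<close> is \<open>Q(1/x) exp(-1/x)\<close> with \<open>Q = X\<^sup>2 (P - P')\<close>;
  as each such function is \<open>o(x)\<close> at \<open>0\<close>, its extension by \<open>0\<close> to \<open>x \<le> 0\<close> is infinitely
  differentiable.\<close>

definition flat_poly_exp :: "real poly \<Rightarrow> real \<Rightarrow> real" where
  "flat_poly_exp P x = (if 0 < x then poly P (inverse x) * exp (- inverse x) else 0)"

definition flat_deriv_poly :: "real poly \<Rightarrow> real poly" where
  "flat_deriv_poly P = [:0,0,1:] * (P - pderiv P)"

lemma poly_times_exp_minus_tendsto:
  fixes R :: "real poly"
  shows "((\<lambda>z. poly R z * exp (- z)) \<longlongrightarrow> 0) at_top"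
proof -
  have eq: "(\<lambda>z. poly R z * exp (- z)) = (\<lambda>z. \<Sum>i\<le>degree R. coeff R i * (z ^ i / exp z))"
    by (rule ext) (simp add: poly_altdef sum_distrib_right exp_minus divide_inverse mult.assoc)
  have "((\<lambda>z. \<Sum>i\<le>degree R. coeff R i * (z ^ i / exp z)) \<longlongrightarrow> 0) at_top"
    by (intro tendsto_null_sum tendsto_mult_right_zero tendsto_power_div_exp_0)
  then show ?thesis unfolding eq .
qed

lemma flat_poly_exp_quotient_tendsto: "((\<lambda>y. flat_poly_exp P y / y) \<longlongrightarrow> 0) (at 0)"
proof -
  have r: "((\<lambda>y. poly (pCons 0 P) (inverse y) * exp (- inverse y)) \<longlongrightarrow> 0) (at_right 0)"
    using filterlim_compose[OF poly_times_exp_minus_tendsto[of "pCons 0 P"] filterlim_inverse_at_top_right] by simp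
  have "\<forall>\<^sub>F y in at_right 0. poly (pCons 0 P) (inverse y) * exp (- inverse y) = flat_poly_exp P y / y"
    using eventually_at_right_less[of "0::real"]
    by eventually_elim (auto simp: flat_poly_exp_def field_simps)
  with r have R: "((\<lambda>y. flat_poly_exp P y / y) \<longlongrightarrow> 0) (at_right 0)" by (rule Lim_transform_eventually)
  have ev: "\<forall>\<^sub>F y in at_left (0::real). y \<in> {-1<..<0}" by (rule eventually_at_left_real) simp
  have "\<forall>\<^sub>F y in at_left 0. 0 = flat_poly_exp P y / y"
    using ev
    by eventually_elim (auto simp: flat_poly_exp_def)
  then have L: "((\<lambda>y. flat_poly_exp P y / y) \<longlongrightarrow> 0) (at_left 0)"
    by (rule Lim_transform_eventually[OF tendsto_const])
  show ?thesis using L R by (simp add: filterlim_at_split)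
qed

lemma poly_inverse_exp_DERIV:
  assumes "0 < x"
  shows "((\<lambda>y. poly P (inverse y) * exp (- inverse y)) has_real_derivative
    flat_poly_exp (flat_deriv_poly P) x) (at x)"
proof -
  have i: "DERIV inverse x :> - (inverse x ^ 2)"
    using DERIV_inverse[of x] assms by (simp add: numeral_2_eq_2)
  have h1: "((\<lambda>y. poly P (inverse y)) has_real_derivative poly (pderiv P) (inverse x) * (- (inverse x ^ 2))) (at x)"
    using DERIV_chain2[OF poly_DERIV i] .
  have h2: "((\<lambda>y. exp (- inverse y)) has_real_derivative exp (- inverse x) * (inverse x ^ 2)) (at x)"
    using DERIV_chain2[OF DERIV_exp DERIV_minus[OF i]] by simp
  have q: "poly (flat_deriv_poly P) (inverse x) =
      inverse x ^ 2 * poly P (inverse x) - inverse x ^ 2 * poly (pderiv P) (inverse x)"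
    by (simp add: flat_deriv_poly_def power2_eq_square algebra_simps)
  have "flat_poly_exp (flat_deriv_poly P) x =
      poly (pderiv P) (inverse x) * (- (inverse x ^ 2)) * exp (- inverse x) +
      exp (- inverse x) * (inverse x ^ 2) * poly P (inverse x)"
    using assms by (simp add: flat_poly_exp_def q algebra_simps)
  then show ?thesis by (simp only:) (rule DERIV_mult[OF h1 h2])
qed

lemma flat_poly_exp_DERIV: "(flat_poly_exp P has_real_derivative flat_poly_exp (flat_deriv_poly P) x) (at x)"
proof -
  consider "x > 0" | "x < 0" | "x = 0" by linarith
  then show ?thesis
  proof cases
    case 1
    show ?thesis
      by (rule has_field_derivative_transform_within_open[OF poly_inverse_exp_DERIV[OF 1], of "{0<..}"])
        (use 1 in \<open>auto simp: flat_poly_exp_def\<close>)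
  next
    case 2
    have D: "((\<lambda>y. 0) has_real_derivative flat_poly_exp (flat_deriv_poly P) x) (at x)"
      using 2 by (simp add: flat_poly_exp_def)
    show ?thesis
      by (rule has_field_derivative_transform_within_open[OF D, of "{..<0}"]) (use 2 in \<open>auto simp: flat_poly_exp_def\<close>)
  next
    case 3
    show ?thesis unfolding has_field_derivative_iff using flat_poly_exp_quotient_tendsto[of P] 3
      by (simp add: flat_poly_exp_def)
  qed
qed

lemma deriv_flat_poly_exp: "deriv (flat_poly_exp P) = flat_poly_exp (flat_deriv_poly P)"
  by (rule ext) (rule DERIV_imp_deriv[OF flat_poly_exp_DERIV])

lemma k_diff_on_flat_poly_exp: "k_diff_on UNIV k (flat_poly_exp P)"
proof (induction k arbitrary: P)
  case (Suc k)
  have "\<forall>x. flat_poly_exp P differentiable (at x)" using flat_poly_exp_DERIV real_differentiable_def by blast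
  then show ?case using Suc by (simp add: deriv_flat_poly_exp)
qed simp

definition flat_exp :: "real \<Rightarrow> real" where "flat_exp = flat_poly_exp 1"

lemma flat_exp_eq: "flat_exp x = (if 0 < x then exp (- inverse x) else 0)"
  by (simp add: flat_exp_def flat_poly_exp_def)

lemma flat_exp_nonneg: "flat_exp x \<ge> 0" by (simp add: flat_exp_eq)
lemma flat_exp_pos: "x > 0 \<Longrightarrow> flat_exp x > 0" by (simp add: flat_exp_eq)

definition smooth_step :: "real \<Rightarrow> real" where
  "smooth_step t = flat_exp t * inverse (flat_exp t + flat_exp (1 - t))"

lemma smooth_step_denom_pos: "flat_exp t + flat_exp (1 - t) > 0"
proof (cases "t > 0")
  case True then show ?thesis using flat_exp_pos[of t] flat_exp_nonneg[of "1-t"] by simp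
next
  case False then show ?thesis using flat_exp_pos[of "1-t"] flat_exp_nonneg[of t] by simp
qed

lemma k_diff_on_smooth_step: "k_diff_on UNIV k smooth_step"
proof -
  have a: "k_diff_on UNIV k (\<lambda>t. flat_exp (-1 * t + 1))"
    using k_diff_on_affine[OF open_UNIV k_diff_on_flat_poly_exp[of k 1], of "-1" 1] by (simp add: flat_exp_def)
  have "k_diff_on UNIV k (\<lambda>t. flat_exp t + flat_exp (-1 * t + 1))"
    by (rule k_diff_on_add[OF open_UNIV _ a]) (simp add: flat_exp_def k_diff_on_flat_poly_exp)
  then have "k_diff_on UNIV k (\<lambda>t. inverse (flat_exp t + flat_exp (-1 * t + 1)))"
    by (rule k_diff_on_inverse[OF open_UNIV]) (metis smooth_step_denom_pos diff_conv_add_uminus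
        mult_minus1 add.commute less_irrefl)
  then have "k_diff_on UNIV k (\<lambda>t. flat_exp t * inverse (flat_exp t + flat_exp (-1 * t + 1)))"
    by (rule k_diff_on_mult[OF open_UNIV, rotated]) (simp add: flat_exp_def k_diff_on_flat_poly_exp)
  then show ?thesis by (simp add: smooth_step_def[abs_def] algebra_simps)
qed

lemma smooth_step_nonpos: "t \<le> 0 \<Longrightarrow> smooth_step t = 0" by (simp add: smooth_step_def flat_exp_eq)
lemma smooth_step_ge_1: "t \<ge> 1 \<Longrightarrow> smooth_step t = 1"
  using smooth_step_denom_pos[of t] by (simp add: smooth_step_def flat_exp_eq)
lemma smooth_step_nonneg: "smooth_step t \<ge> 0"
  using smooth_step_denom_pos[of t] flat_exp_nonneg[of t] by (simp add: smooth_step_def)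
lemma smooth_step_le_1: "smooth_step t \<le> 1"
  using smooth_step_denom_pos[of t] flat_exp_nonneg[of t] flat_exp_nonneg[of "1-t"] by (simp add: smooth_step_def field_simps)

lemma smooth_step_differentiable: "smooth_step differentiable (at t)"
  using k_diff_on_smooth_step[of 1] by simp

lemma smooth_step_DERIV: "DERIV smooth_step t :> deriv smooth_step t"
  using smooth_step_differentiable real_differentiable_DERIV_deriv by blast

lemma deriv_smooth_step_differentiable: "deriv smooth_step differentiable (at t)"
  using k_diff_on_smooth_step[of 2] by (simp add: numeral_2_eq_2)

lemma deriv_smooth_step_outside: assumes "t < 0 \<or> t > 1" shows "deriv smooth_step t = 0"
proof -
  from assms consider "t < 0" | "t > 1" by blast
  then show ?thesis
  proof cases
    case 1
    have "deriv smooth_step t = deriv (\<lambda>_. 0) t"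
      by (rule deriv_cong_open[of "{..<0}"]) (use 1 smooth_step_nonpos in auto)
    then show ?thesis by simp
  next
    case 2
    have "deriv smooth_step t = deriv (\<lambda>_. 1) t"
      by (rule deriv_cong_open[of "{1<..}"]) (use 2 smooth_step_ge_1 in auto)
    then show ?thesis by simp
  qed
qed

lemma deriv_smooth_step_bounded: "\<exists>M. \<forall>t. \<bar>deriv smooth_step t\<bar> \<le> M"
proof -
  have c: "continuous_on {0..1} (deriv smooth_step)"
    using deriv_smooth_step_differentiable by (meson continuous_at_imp_continuous_on differentiable_imp_continuous_within)
  have "bounded (deriv smooth_step ` {0..1})"
    by (rule compact_imp_bounded[OF compact_continuous_image[OF c compact_Icc]])
  then obtain M where M0: "\<forall>x\<in>deriv smooth_step ` {0..1}. \<bar>x\<bar> \<le> M"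
    unfolding bounded_real by blast
  have M: "\<And>t. t \<in> {0..1} \<Longrightarrow> \<bar>deriv smooth_step t\<bar> \<le> M" using M0 by blast
  have "\<bar>deriv smooth_step t\<bar> \<le> M" for t
  proof (cases "t \<in> {0..1}")
    case True then show ?thesis using M by blast
  next
    case False then have "deriv smooth_step t = 0" using deriv_smooth_step_outside by auto
    then show ?thesis using M[of 0] by simp
  qed
  then show ?thesis by blast
qed

definition step_slope_bound :: real where "step_slope_bound = (SOME M. \<forall>t. \<bar>deriv smooth_step t\<bar> \<le> M)"

lemma step_slope_bound: "\<bar>deriv smooth_step t\<bar> \<le> step_slope_bound"
  using someI_ex[OF deriv_smooth_step_bounded] unfolding step_slope_bound_def by blast

lemma step_slope_bound_nonneg: "step_slope_bound \<ge> 0"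
  using step_slope_bound[of 0] by simp


section \<open>Integrals over an interval\<close>

lemma space_intv: "space (intv a b) = {a<..<b}"
  by (simp add: intv_def space_restrict_space)

lemma finite_measure_intv: "finite_measure (intv a b)"
proof (rule finite_measureI)
  show "emeasure (intv a b) (space (intv a b)) \<noteq> \<infinity>"
    unfolding space_intv intv_def by (subst emeasure_restrict_space) (auto, cases "a \<le> b", auto)
qed

lemma borel_measurable_intv: "f \<in> borel_measurable borel \<Longrightarrow> f \<in> borel_measurable (intv a b)"
  unfolding intv_def by (rule measurable_restrict_space1) simp

lemma AE_intvI: "(\<And>x. a < x \<Longrightarrow> x < b \<Longrightarrow> P x) \<Longrightarrow> AE x in intv a b. P x"
  by (rule AE_I2) (auto simp: space_intv)

lemma integrable_intv_bounded:
  fixes f :: "real \<Rightarrow> real"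
  assumes "f \<in> borel_measurable borel" "bounded (f ` {a<..<b})"
  shows "integrable (intv a b) f"
proof -
  obtain B where B: "\<forall>y\<in>f ` {a<..<b}. \<bar>y\<bar> \<le> B"
    using assms(2) unfolding bounded_real by blast
  show ?thesis
  proof (rule finite_measure.integrable_const_bound[OF finite_measure_intv, where B=B])
    show "AE x in intv a b. norm (f x) \<le> B" using B by (intro AE_intvI) auto
  qed (rule borel_measurable_intv[OF assms(1)])
qed

lemma bounded_image_mult:
  fixes f g :: "real \<Rightarrow> real"
  assumes "bounded (f ` S)" "bounded (g ` S)"
  shows "bounded ((\<lambda>x. f x * g x) ` S)"
proof -
  obtain B C where B: "\<forall>y\<in>f ` S. \<bar>y\<bar> \<le> B" and C: "\<forall>y\<in>g ` S. \<bar>y\<bar> \<le> C"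
    using assms unfolding bounded_real by blast
  have "\<bar>f x * g x\<bar> \<le> B * C" if "x \<in> S" for x
    unfolding abs_mult using B C that by (intro mult_mono) (auto intro: order_trans[OF abs_ge_zero])
  then show ?thesis unfolding bounded_real by blast
qed

lemma L2_bounded:
  assumes "f \<in> borel_measurable borel" "bounded (f ` {a<..<b})"
  shows "L2 a b f"
  unfolding L2_def
proof
  show "integrable (intv a b) (\<lambda>x. (f x)\<^sup>2)"
    using assms by (intro integrable_intv_bounded) (auto simp: power2_eq_square intro: bounded_image_mult)
qed (rule borel_measurable_intv[OF assms(1)])

lemma integrable_mult_of_squares:
  fixes f g :: "real \<Rightarrow> real"
  assumes "integrable M (\<lambda>x. (f x)\<^sup>2)" "integrable M (\<lambda>x. (g x)\<^sup>2)"
    "f \<in> borel_measurable M" "g \<in> borel_measurable M"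
  shows "integrable M (\<lambda>x. f x * g x)"
proof -
  have "integrable M (\<lambda>x. (f x)\<^sup>2 + (g x)\<^sup>2)" using assms by auto
  then show ?thesis
  proof (rule Bochner_Integration.integrable_bound)
    show "AE x in M. norm (f x * g x) \<le> norm ((f x)\<^sup>2 + (g x)\<^sup>2)"
    proof (rule AE_I2)
      fix x
      have "2 * \<bar>f x * g x\<bar> \<le> (f x)\<^sup>2 + (g x)\<^sup>2"
        using sum_squares_bound[of "\<bar>f x\<bar>" "\<bar>g x\<bar>"] by (simp add: abs_mult power2_abs)
      then show "norm (f x * g x) \<le> norm ((f x)\<^sup>2 + (g x)\<^sup>2)" by simp
    qed
  qed (use assms in auto)
qed

lemma L2_integrable_mult: "L2 a b f \<Longrightarrow> L2 a b g \<Longrightarrow> integrable (intv a b) (\<lambda>x. f x * g x)"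
  unfolding L2_def by (intro integrable_mult_of_squares) auto

lemma L2_diff:
  assumes "L2 a b f" "L2 a b g"
  shows "L2 a b (\<lambda>x. f x - g x)"
proof -
  have m: "(\<lambda>x. f x - g x) \<in> borel_measurable (intv a b)"
    using assms unfolding L2_def by auto
  have "(\<lambda>x. (f x - g x)\<^sup>2) = (\<lambda>x. (f x)\<^sup>2 - 2 * (f x * g x) + (g x)\<^sup>2)"
    by (auto simp: power2_diff algebra_simps)
  moreover have "integrable (intv a b) (\<lambda>x. (f x)\<^sup>2 - 2 * (f x * g x) + (g x)\<^sup>2)"
    using assms L2_integrable_mult[OF assms] unfolding L2_def by auto
  ultimately have "integrable (intv a b) (\<lambda>x. (f x - g x)\<^sup>2)" by simp
  then show ?thesis unfolding L2_def using m by blast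
qed

lemma integral_mult_abs_le:
  fixes w v :: "real \<Rightarrow> real"
  assumes w2: "integrable M (\<lambda>x. (w x)\<^sup>2)" and v2: "integrable M (\<lambda>x. (v x)\<^sup>2)"
    and "w \<in> borel_measurable M" "v \<in> borel_measurable M" and e: "e > 0"
  shows "\<bar>\<integral>x. w x * v x \<partial>M\<bar> \<le> (e * (\<integral>x. (w x)\<^sup>2 \<partial>M) + (\<integral>x. (v x)\<^sup>2 \<partial>M) / e) / 2"
proof -
  have "\<bar>\<integral>x. w x * v x \<partial>M\<bar> \<le> (\<integral>x. \<bar>w x * v x\<bar> \<partial>M)"
    by (rule integral_abs_bound[THEN order_trans]) simp
  also have "\<dots> \<le> (\<integral>x. (e * (w x)\<^sup>2 + (v x)\<^sup>2 / e) / 2 \<partial>M)"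
  proof (rule integral_mono)
    show "integrable M (\<lambda>x. \<bar>w x * v x\<bar>)"
      using integrable_mult_of_squares[OF assms(1-4)] by auto
    show "integrable M (\<lambda>x. (e * (w x)\<^sup>2 + (v x)\<^sup>2 / e) / 2)"
      using w2 v2 by auto
    fix x
    have "0 \<le> (sqrt e * \<bar>w x\<bar> - \<bar>v x\<bar> / sqrt e)\<^sup>2" by simp
    also have "\<dots> = e * (w x)\<^sup>2 + (v x)\<^sup>2 / e - 2 * \<bar>w x * v x\<bar>"
      using e by (simp add: power2_diff power_divide real_sqrt_pow2 abs_mult field_simps power2_abs)
    finally show "\<bar>w x * v x\<bar> \<le> (e * (w x)\<^sup>2 + (v x)\<^sup>2 / e) / 2" by simp
  qed
  also have "\<dots> = (e * (\<integral>x. (w x)\<^sup>2 \<partial>M) + (\<integral>x. (v x)\<^sup>2 \<partial>M) / e) / 2"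
    using w2 v2 by simp
  finally show ?thesis .
qed

lemma integral_mult_tendsto_0:
  fixes w :: "real \<Rightarrow> real" and v :: "nat \<Rightarrow> real \<Rightarrow> real"
  assumes w2: "integrable M (\<lambda>x. (w x)\<^sup>2)" and v2: "\<And>k. integrable M (\<lambda>x. (v k x)\<^sup>2)"
    and wm: "w \<in> borel_measurable M" and vm: "\<And>k. v k \<in> borel_measurable M"
    and lim: "(\<lambda>k. \<integral>x. (v k x)\<^sup>2 \<partial>M) \<longlonglongrightarrow> 0"
  shows "(\<lambda>k. \<integral>x. w x * v k x \<partial>M) \<longlonglongrightarrow> 0"
proof (rule LIMSEQ_I)
  fix r :: real assume r: "r > 0"
  define W where "W = (\<integral>x. (w x)\<^sup>2 \<partial>M)"
  have "W \<ge> 0" unfolding W_def by (intro integral_nonneg_AE) auto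
  define e where "e = r / (W + 1)"
  have e: "e > 0" "e * W < r" using r \<open>W \<ge> 0\<close> by (simp_all add: e_def field_simps)
  obtain N where N: "\<And>k. k \<ge> N \<Longrightarrow> \<bar>\<integral>x. (v k x)\<^sup>2 \<partial>M\<bar> < r * e"
    using LIMSEQ_D[OF lim, of "r * e"] r e by auto
  have "norm ((\<integral>x. w x * v k x \<partial>M) - 0) < r" if "k \<ge> N" for k
  proof -
    have "(\<integral>x. (v k x)\<^sup>2 \<partial>M) / e < r" using N[OF that] e by (simp add: field_simps)
    then show ?thesis
      using integral_mult_abs_le[OF w2 v2 wm vm e(1), of k] e(2) unfolding W_def by simp
  qed
  then show "\<exists>N. \<forall>k\<ge>N. norm ((\<integral>x. w x * v k x \<partial>M) - 0) < r" by blast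
qed

lemma L2_integral_mult_tendsto:
  assumes w: "L2 a b w" and f: "L2 a b f" and p: "\<And>k. L2 a b (p k)"
    and lim: "(\<lambda>k. \<integral>x. (p k x - f x)\<^sup>2 \<partial>intv a b) \<longlonglongrightarrow> 0"
  shows "(\<lambda>k. \<integral>x. w x * p k x \<partial>intv a b) \<longlonglongrightarrow> (\<integral>x. w x * f x \<partial>intv a b)"
proof -
  have "(\<lambda>k. \<integral>x. w x * (p k x - f x) \<partial>intv a b) \<longlonglongrightarrow> 0"
    using w L2_diff[OF p f] lim unfolding L2_def by (intro integral_mult_tendsto_0) auto
  moreover have "(\<integral>x. w x * (p k x - f x) \<partial>intv a b) =
      (\<integral>x. w x * p k x \<partial>intv a b) - (\<integral>x. w x * f x \<partial>intv a b)" for k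
    using L2_integrable_mult[OF w p] L2_integrable_mult[OF w f] by (simp add: right_diff_distrib)
  ultimately show ?thesis
    using tendsto_add[OF _ tendsto_const[of "\<integral>x. w x * f x \<partial>intv a b"]] by fastforce
qed

lemma integral_sq_tendsto_0:
  fixes h :: "nat \<Rightarrow> real \<Rightarrow> real"
  assumes m: "\<And>k. h k \<in> borel_measurable borel"
    and bound: "\<And>k x. a < x \<Longrightarrow> x < b \<Longrightarrow> \<bar>h k x\<bar> \<le> K"
    and ev: "\<And>x. a < x \<Longrightarrow> x < b \<Longrightarrow> \<forall>\<^sub>F k in sequentially. h k x = 0"
  shows "(\<lambda>k. \<integral>x. (h k x)\<^sup>2 \<partial>intv a b) \<longlonglongrightarrow> 0"
proof -
  have "(\<lambda>k. \<integral>x. (h k x)\<^sup>2 \<partial>intv a b) \<longlonglongrightarrow> (\<integral>x. 0 \<partial>intv a b)"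
  proof (rule integral_dominated_convergence[where w="\<lambda>x. K\<^sup>2"])
    show "(\<lambda>x. (h k x)\<^sup>2) \<in> borel_measurable (intv a b)" for k
      by (rule borel_measurable_intv) (use m in measurable)
    show "integrable (intv a b) (\<lambda>x. K\<^sup>2)"
      by (rule finite_measure.integrable_const[OF finite_measure_intv])
    show "AE x in intv a b. (\<lambda>k. (h k x)\<^sup>2) \<longlonglongrightarrow> 0"
    proof (rule AE_intvI)
      fix x :: real assume "a < x" "x < b"
      from ev[OF this] have "\<forall>\<^sub>F k in sequentially. (h k x)\<^sup>2 = 0" by eventually_elim simp
      then show "(\<lambda>k. (h k x)\<^sup>2) \<longlonglongrightarrow> 0" by (rule tendsto_eventually)
    qed
    show "AE x in intv a b. norm ((h k x)\<^sup>2) \<le> K\<^sup>2" for k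
    proof (rule AE_intvI)
      fix x :: real assume "a < x" "x < b"
      then have "\<bar>h k x\<bar>\<^sup>2 \<le> K\<^sup>2" by (intro power_mono bound) auto
      then show "norm ((h k x)\<^sup>2) \<le> K\<^sup>2" by simp
    qed
  qed simp
  then show ?thesis by simp
qed

lemma AE_piecewise_indicator:
  fixes f f1 f2 f3 :: "real \<Rightarrow> real"
  assumes "a \<le> b" "b \<le> c" "c \<le> d"
    and "\<And>x. a < x \<Longrightarrow> x < b \<Longrightarrow> f x = f1 x"
    and "\<And>x. b < x \<Longrightarrow> x < c \<Longrightarrow> f x = f2 x"
    and "\<And>x. c < x \<Longrightarrow> x < d \<Longrightarrow> f x = f3 x"
  shows "AE x in lborel. indicator {a..b} x * f1 x + indicator {b..c} x * f2 x + indicator {c..d} x * f3 x =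
    indicator {a<..<d} x * f x"
proof -
  have "AE x in lborel. x \<noteq> a \<and> x \<noteq> b \<and> x \<noteq> c \<and> x \<noteq> d"
    using AE_lborel_singleton[of a] AE_lborel_singleton[of b]
      AE_lborel_singleton[of c] AE_lborel_singleton[of d] by eventually_elim auto
  then show ?thesis
  proof eventually_elim
    case (elim x)
    consider "x < a \<or> x > d" | "a < x \<and> x < b" | "b < x \<and> x < c" | "c < x \<and> x < d"
      using elim by linarith
    then show ?case by cases (use assms in auto)
  qed
qed

lemma integral_intv_piecewise_FTC:
  fixes f F1 F2 F3 f1 f2 f3 :: "real \<Rightarrow> real"
  assumes "a \<le> b" "b \<le> c" "c \<le> d"
    and d1: "\<And>x. a \<le> x \<Longrightarrow> x \<le> b \<Longrightarrow> (F1 has_real_derivative f1 x) (at x)" and c1: "continuous_on {a..b} f1"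
    and d2: "\<And>x. b \<le> x \<Longrightarrow> x \<le> c \<Longrightarrow> (F2 has_real_derivative f2 x) (at x)" and c2: "continuous_on {b..c} f2"
    and d3: "\<And>x. c \<le> x \<Longrightarrow> x \<le> d \<Longrightarrow> (F3 has_real_derivative f3 x) (at x)" and c3: "continuous_on {c..d} f3"
    and e1: "\<And>x. a < x \<Longrightarrow> x < b \<Longrightarrow> f x = f1 x"
    and e2: "\<And>x. b < x \<Longrightarrow> x < c \<Longrightarrow> f x = f2 x"
    and e3: "\<And>x. c < x \<Longrightarrow> x < d \<Longrightarrow> f x = f3 x"
    and m: "f \<in> borel_measurable borel"
  shows "integrable (intv a d) f \<and> (\<integral>x. f x \<partial>intv a d) = (F1 b - F1 a) + (F2 c - F2 b) + (F3 d - F3 c)"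
proof -
  define g where "g x = indicator {a..b} x * f1 x + indicator {b..c} x * f2 x + indicator {c..d} x * f3 x"
    for x :: real
  have i1: "integrable lborel (\<lambda>x. indicator {a..b} x * f1 x)"
    using borel_integrable_atLeastAtMost'[OF c1] unfolding set_integrable_def by simp
  have i2: "integrable lborel (\<lambda>x. indicator {b..c} x * f2 x)"
    using borel_integrable_atLeastAtMost'[OF c2] unfolding set_integrable_def by simp
  have i3: "integrable lborel (\<lambda>x. indicator {c..d} x * f3 x)"
    using borel_integrable_atLeastAtMost'[OF c3] unfolding set_integrable_def by simp
  have ig: "integrable lborel g" unfolding g_def using i1 i2 i3 by auto
  have FTC: "integral\<^sup>L lborel (\<lambda>x. indicator {p..q} x * h x) = H q - H p"
    if "p \<le> q" "\<And>x. p \<le> x \<Longrightarrow> x \<le> q \<Longrightarrow> (H has_real_derivative h x) (at x)"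
       "continuous_on {p..q} h" for p q :: real and H h
    using integral_FTC_atLeastAtMost[OF that(1) _ that(3), of H] that(2)
    by (simp add: has_real_derivative_iff_has_vector_derivative has_vector_derivative_at_within)
  have Ig: "integral\<^sup>L lborel g = (F1 b - F1 a) + (F2 c - F2 b) + (F3 d - F3 c)"
    unfolding g_def using i1 i2 i3 FTC[OF _ d1 c1] FTC[OF _ d2 c2] FTC[OF _ d3 c3] assms(1-3) by simp
  have ae: "AE x in lborel. g x = indicator {a<..<d} x * f x"
    unfolding g_def by (rule AE_piecewise_indicator[OF assms(1-3) e1 e2 e3])
  have mi: "(\<lambda>x. indicator {a<..<d} x * f x) \<in> borel_measurable lborel"
    using m by simp
  have "integrable lborel (\<lambda>x. indicator {a<..<d} x * f x)"
    by (rule integrable_cong_AE_imp[OF ig mi ae])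
  moreover have "integral\<^sup>L lborel (\<lambda>x. indicator {a<..<d} x * f x) = integral\<^sup>L lborel g"
    using ae by (intro integral_cong_AE[OF mi borel_measurable_integrable[OF ig]]) (auto elim: AE_mp)
  ultimately show ?thesis using Ig
    by (simp add: intv_def integrable_restrict_space integral_restrict_space)
qed

section \<open>Test functions and weak derivatives of piecewise smooth functions\<close>

lemma test_fun_differentiable: "test_fun a b \<psi> \<Longrightarrow> \<psi> differentiable (at x)"
  unfolding test_fun_def using funpow_0 by metis

lemma test_fun_DERIV: "test_fun a b \<psi> \<Longrightarrow> DERIV \<psi> x :> deriv \<psi> x"
  using test_fun_differentiable real_differentiable_DERIV_deriv by blast

lemma test_fun_continuous_on: "test_fun a b \<psi> \<Longrightarrow> continuous_on S \<psi>"
  using test_fun_differentiable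
  by (meson continuous_at_imp_continuous_on differentiable_imp_continuous_within)

lemma test_fun_measurable: "test_fun a b \<psi> \<Longrightarrow> \<psi> \<in> borel_measurable borel"
  by (rule borel_measurable_continuous_onI) (rule test_fun_continuous_on)

lemma test_fun_deriv: "test_fun a b \<psi> \<Longrightarrow> test_fun a b (deriv \<psi>)"
proof -
  assume t: "test_fun a b \<psi>"
  then obtain K where K: "compact K" "K \<subseteq> {a<..<b}" "\<And>x. x \<notin> K \<Longrightarrow> \<psi> x = 0"
    unfolding test_fun_def by blast
  have "\<forall>k x. (deriv ^^ k) (deriv \<psi>) differentiable (at x)"
    using t unfolding test_fun_def by (metis funpow_Suc_right o_apply)
  moreover have "deriv \<psi> x = 0" if "x \<notin> K" for x
  proof -
    have "deriv \<psi> x = deriv (\<lambda>_. 0) x"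
      by (rule deriv_cong_open[of "- K"]) (use K that compact_imp_closed in auto)
    then show ?thesis by simp
  qed
  ultimately show ?thesis unfolding test_fun_def using K by blast
qed

lemma test_fun_bounded: "test_fun a b \<psi> \<Longrightarrow> bounded (\<psi> ` S)"
proof -
  assume t: "test_fun a b \<psi>"
  then obtain K where K: "compact K" "\<And>x. x \<notin> K \<Longrightarrow> \<psi> x = 0"
    unfolding test_fun_def by blast
  have "bounded (\<psi> ` K)"
    by (rule compact_imp_bounded[OF compact_continuous_image[OF test_fun_continuous_on[OF t] K(1)]])
  then have "bounded (insert 0 (\<psi> ` K))" by simp
  moreover have "\<psi> ` S \<subseteq> insert 0 (\<psi> ` K)" using K(2) by auto
  ultimately show ?thesis by (rule bounded_subset)
qed

lemma test_fun_endpoints: "test_fun a b \<psi> \<Longrightarrow> \<psi> a = 0 \<and> \<psi> b = 0"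
  unfolding test_fun_def by force

lemma L2_test_fun: "test_fun a b \<psi> \<Longrightarrow> L2 a b \<psi>"
  by (intro L2_bounded test_fun_measurable test_fun_bounded)

lemma piecewise_bounded:
  fixes f f1 f2 f3 :: "real \<Rightarrow> real"
  assumes "continuous_on {a..b} f1" "continuous_on {b..c} f2" "continuous_on {c..d} f3"
    "\<And>x. a < x \<Longrightarrow> x < b \<Longrightarrow> f x = f1 x" "\<And>x. b < x \<Longrightarrow> x < c \<Longrightarrow> f x = f2 x"
    "\<And>x. c < x \<Longrightarrow> x < d \<Longrightarrow> f x = f3 x"
  shows "bounded (f ` {a<..<d})"
proof -
  let ?R = "f1 ` {a..b} \<union> f2 ` {b..c} \<union> f3 ` {c..d} \<union> {f b, f c}"
  have "bounded (f1 ` {a..b} \<union> f2 ` {b..c} \<union> f3 ` {c..d})"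
    unfolding bounded_Un using assms(1-3)
    by (intro conjI compact_imp_bounded compact_continuous_image compact_Icc)
  then have "bounded ?R" by simp
  moreover have "f ` {a<..<d} \<subseteq> ?R"
  proof
    fix y assume "y \<in> f ` {a<..<d}"
    then obtain x where x: "a < x" "x < d" "y = f x" by auto
    consider "x < b" | "x = b" | "b < x \<and> x < c" | "x = c" | "c < x" by linarith
    then show "y \<in> ?R" by cases (use x assms(4-6) in auto)
  qed
  ultimately show ?thesis by (rule bounded_subset)
qed

text \<open>Integration by parts on each piece; the boundary terms telescope because the pieces agree at
  the breakpoints and the test function vanishes at the ends.\<close>

lemma integral_piecewise_by_parts:
  fixes u g U1 U2 U3 G1 G2 G3 :: "real \<Rightarrow> real"
  assumes "a \<le> b" "b \<le> c" "c \<le> d" and t: "test_fun a d \<psi>"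
    and d1: "\<And>x. a \<le> x \<Longrightarrow> x \<le> b \<Longrightarrow> (U1 has_real_derivative G1 x) (at x)" and c1: "continuous_on {a..b} G1"
    and d2: "\<And>x. b \<le> x \<Longrightarrow> x \<le> c \<Longrightarrow> (U2 has_real_derivative G2 x) (at x)" and c2: "continuous_on {b..c} G2"
    and d3: "\<And>x. c \<le> x \<Longrightarrow> x \<le> d \<Longrightarrow> (U3 has_real_derivative G3 x) (at x)" and c3: "continuous_on {c..d} G3"
    and "U1 b = U2 b" "U2 c = U3 c"
    and u1: "\<And>x. a < x \<Longrightarrow> x < b \<Longrightarrow> u x = U1 x"
    and u2: "\<And>x. b < x \<Longrightarrow> x < c \<Longrightarrow> u x = U2 x"
    and u3: "\<And>x. c < x \<Longrightarrow> x < d \<Longrightarrow> u x = U3 x"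
    and g1: "\<And>x. a < x \<Longrightarrow> x < b \<Longrightarrow> g x = G1 x"
    and g2: "\<And>x. b < x \<Longrightarrow> x < c \<Longrightarrow> g x = G2 x"
    and g3: "\<And>x. c < x \<Longrightarrow> x < d \<Longrightarrow> g x = G3 x"
    and mu: "u \<in> borel_measurable borel" and mg: "g \<in> borel_measurable borel"
  shows "(\<integral>x. u x * deriv \<psi> x + g x * \<psi> x \<partial>intv a d) = 0"
proof -
  have D: "\<And>x. DERIV \<psi> x :> deriv \<psi> x" using test_fun_DERIV[OF t] .
  have cont: "continuous_on S \<psi>" "continuous_on S (deriv \<psi>)" for S
    using test_fun_continuous_on[OF t] test_fun_continuous_on[OF test_fun_deriv[OF t]] by auto
  have cont_piece: "continuous_on {p..q} (\<lambda>x. G x * \<psi> x + deriv \<psi> x * U x)"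
    if "continuous_on {p..q} G" "\<And>x. p \<le> x \<Longrightarrow> x \<le> q \<Longrightarrow> (U has_real_derivative G x) (at x)"
    for p q :: real and U G
    using that cont DERIV_atLeastAtMost_imp_continuous_on[of p q U]
    by (intro continuous_on_add continuous_on_mult) blast+
  have "(\<integral>x. u x * deriv \<psi> x + g x * \<psi> x \<partial>intv a d) =
      (U1 b * \<psi> b - U1 a * \<psi> a) + (U2 c * \<psi> c - U2 b * \<psi> b) + (U3 d * \<psi> d - U3 c * \<psi> c)"
  proof (rule conjunct2[OF integral_intv_piecewise_FTC[OF assms(1-3), where
        ?F1.0="\<lambda>x. U1 x * \<psi> x" and ?F2.0="\<lambda>x. U2 x * \<psi> x" and ?F3.0="\<lambda>x. U3 x * \<psi> x"
        and ?f1.0="\<lambda>x. G1 x * \<psi> x + deriv \<psi> x * U1 x" and ?f2.0="\<lambda>x. G2 x * \<psi> x + deriv \<psi> x * U2 x"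
        and ?f3.0="\<lambda>x. G3 x * \<psi> x + deriv \<psi> x * U3 x"]])
    show "((\<lambda>x. U1 x * \<psi> x) has_real_derivative G1 x * \<psi> x + deriv \<psi> x * U1 x) (at x)"
      if "a \<le> x" "x \<le> b" for x using DERIV_mult[OF d1[OF that] D] .
    show "((\<lambda>x. U2 x * \<psi> x) has_real_derivative G2 x * \<psi> x + deriv \<psi> x * U2 x) (at x)"
      if "b \<le> x" "x \<le> c" for x using DERIV_mult[OF d2[OF that] D] .
    show "((\<lambda>x. U3 x * \<psi> x) has_real_derivative G3 x * \<psi> x + deriv \<psi> x * U3 x) (at x)"
      if "c \<le> x" "x \<le> d" for x using DERIV_mult[OF d3[OF that] D] .
    show "(\<lambda>x. u x * deriv \<psi> x + g x * \<psi> x) \<in> borel_measurable borel"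
      by (intro borel_measurable_add borel_measurable_times mu mg test_fun_measurable[OF t]
          test_fun_measurable[OF test_fun_deriv[OF t]])
  qed (use c1 c2 c3 d1 d2 d3 cont_piece u1 u2 u3 g1 g2 g3 in \<open>auto simp: algebra_simps\<close>)
  also have "\<dots> = 0"
    using test_fun_endpoints[OF t] assms(11,12) by simp
  finally show ?thesis .
qed

lemma weak_deriv_piecewise:
  fixes u g U1 U2 U3 G1 G2 G3 :: "real \<Rightarrow> real"
  assumes "a \<le> b" "b \<le> c" "c \<le> d"
    and d1: "\<And>x. a \<le> x \<Longrightarrow> x \<le> b \<Longrightarrow> (U1 has_real_derivative G1 x) (at x)" and c1: "continuous_on {a..b} G1"
    and d2: "\<And>x. b \<le> x \<Longrightarrow> x \<le> c \<Longrightarrow> (U2 has_real_derivative G2 x) (at x)" and c2: "continuous_on {b..c} G2"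
    and d3: "\<And>x. c \<le> x \<Longrightarrow> x \<le> d \<Longrightarrow> (U3 has_real_derivative G3 x) (at x)" and c3: "continuous_on {c..d} G3"
    and "U1 b = U2 b" "U2 c = U3 c"
    and u1: "\<And>x. a < x \<Longrightarrow> x < b \<Longrightarrow> u x = U1 x"
    and u2: "\<And>x. b < x \<Longrightarrow> x < c \<Longrightarrow> u x = U2 x"
    and u3: "\<And>x. c < x \<Longrightarrow> x < d \<Longrightarrow> u x = U3 x"
    and g1: "\<And>x. a < x \<Longrightarrow> x < b \<Longrightarrow> g x = G1 x"
    and g2: "\<And>x. b < x \<Longrightarrow> x < c \<Longrightarrow> g x = G2 x"
    and g3: "\<And>x. c < x \<Longrightarrow> x < d \<Longrightarrow> g x = G3 x"
    and mu: "u \<in> borel_measurable borel" and mg: "g \<in> borel_measurable borel"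
  shows "weak_deriv a d u g"
  unfolding weak_deriv_def
proof (intro conjI allI impI)
  have bu: "bounded (u ` {a<..<d})"
    using d1 d2 d3 u1 u2 u3
    by (intro piecewise_bounded[of a b U1 c U2 d U3]) (auto intro!: DERIV_atLeastAtMost_imp_continuous_on)
  have bg: "bounded (g ` {a<..<d})" by (rule piecewise_bounded[OF c1 c2 c3 g1 g2 g3])
  show iu: "integrable (intv a d) u" by (rule integrable_intv_bounded[OF mu bu])
  show ig: "integrable (intv a d) g" by (rule integrable_intv_bounded[OF mg bg])
  fix \<psi> assume t: "test_fun a d \<psi>"
  have i1: "integrable (intv a d) (\<lambda>x. u x * deriv \<psi> x)"
    by (intro integrable_intv_bounded bounded_image_mult bu test_fun_bounded[OF test_fun_deriv[OF t]]
        borel_measurable_times mu test_fun_measurable[OF test_fun_deriv[OF t]])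
  have i2: "integrable (intv a d) (\<lambda>x. g x * \<psi> x)"
    by (intro integrable_intv_bounded bounded_image_mult bg test_fun_bounded[OF t]
        borel_measurable_times mg test_fun_measurable[OF t])
  have "(\<integral>x. u x * deriv \<psi> x + g x * \<psi> x \<partial>intv a d) = 0"
    by (rule integral_piecewise_by_parts[OF assms(1-3) t d1 c1 d2 c2 d3 c3 assms(10,11) u1 u2 u3 g1 g2 g3 mu mg])
  then show "(\<integral>x. u x * deriv \<psi> x \<partial>intv a d) = - (\<integral>x. g x * \<psi> x \<partial>intv a d)"
    using i1 i2 by simp
qed

lemma weak_deriv_integral_test_fun:
  "weak_deriv a b \<phi> g \<Longrightarrow> weak_deriv a b \<phi> h \<Longrightarrow> test_fun a b \<psi> \<Longrightarrow>
    (\<integral>x. \<psi> x * g x \<partial>intv a b) = (\<integral>x. \<psi> x * h x \<partial>intv a b)"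
  unfolding weak_deriv_def by (simp add: mult.commute)

lemma weak_deriv_integral_unique:
  assumes "weak_deriv a b \<phi> g" "weak_deriv a b \<phi> h" "L2 a b g" "L2 a b h"
    and q: "\<And>k. test_fun a b (q k)" and "L2 a b v"
    and lim: "(\<lambda>k. \<integral>x. (q k x - v x)\<^sup>2 \<partial>intv a b) \<longlonglongrightarrow> 0"
  shows "(\<integral>x. v x * g x \<partial>intv a b) = (\<integral>x. v x * h x \<partial>intv a b)"
proof -
  have "(\<lambda>k. \<integral>x. w x * q k x \<partial>intv a b) \<longlonglongrightarrow> (\<integral>x. w x * v x \<partial>intv a b)" if "L2 a b w" for w
    using L2_integral_mult_tendsto[OF that \<open>L2 a b v\<close> L2_test_fun[OF q] lim] .
  from this[OF \<open>L2 a b g\<close>] this[OF \<open>L2 a b h\<close>]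
  have "(\<lambda>k. \<integral>x. q k x * g x \<partial>intv a b) \<longlonglongrightarrow> (\<integral>x. v x * g x \<partial>intv a b)"
    "(\<lambda>k. \<integral>x. q k x * g x \<partial>intv a b) \<longlonglongrightarrow> (\<integral>x. v x * h x \<partial>intv a b)"
    using weak_deriv_integral_test_fun[OF assms(1,2) q] by (simp_all add: mult.commute)
  then show ?thesis by (rule LIMSEQ_unique)
qed

lemma integral_by_parts_H10:
  assumes wd: "weak_deriv a b v w" and "L2 a b v" "L2 a b w" "L2 a b \<phi>" "L2 a b g"
    and \<psi>: "\<And>k. test_fun a b (\<psi> k)"
    and lim: "(\<lambda>k. \<integral>x. (\<psi> k x - \<phi> x)\<^sup>2 \<partial>intv a b) \<longlonglongrightarrow> 0"
    and lim': "(\<lambda>k. \<integral>x. (deriv (\<psi> k) x - g x)\<^sup>2 \<partial>intv a b) \<longlonglongrightarrow> 0"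
  shows "(\<integral>x. v x * g x \<partial>intv a b) = - (\<integral>x. w x * \<phi> x \<partial>intv a b)"
proof -
  have "(\<lambda>k. \<integral>x. v x * deriv (\<psi> k) x \<partial>intv a b) \<longlonglongrightarrow> (\<integral>x. v x * g x \<partial>intv a b)"
    using L2_integral_mult_tendsto[OF \<open>L2 a b v\<close> \<open>L2 a b g\<close> L2_test_fun[OF test_fun_deriv[OF \<psi>]] lim'] .
  moreover have "(\<lambda>k. \<integral>x. v x * deriv (\<psi> k) x \<partial>intv a b) \<longlonglongrightarrow> - (\<integral>x. w x * \<phi> x \<partial>intv a b)"
    using tendsto_minus[OF L2_integral_mult_tendsto[OF \<open>L2 a b w\<close> \<open>L2 a b \<phi>\<close> L2_test_fun[OF \<psi>] lim]]
      wd \<psi> unfolding weak_deriv_def by simp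
  ultimately show ?thesis by (rule LIMSEQ_unique)
qed

lemma taylor_bound_order2:
  fixes g g' g'' :: "real \<Rightarrow> real"
  assumes d: "\<And>x. c \<le> x \<Longrightarrow> x \<le> c + h \<Longrightarrow> DERIV g x :> g' x"
    and d': "\<And>x. c \<le> x \<Longrightarrow> x \<le> c + h \<Longrightarrow> DERIV g' x :> g'' x"
    and b: "\<And>x. c \<le> x \<Longrightarrow> x \<le> c + h \<Longrightarrow> \<bar>g'' x\<bar> \<le> C"
    and z: "g c = 0" "g' c = 0"
    and x: "c \<le> x" "x \<le> c + h"
  shows "\<bar>g' x\<bar> \<le> C * (x - c) \<and> \<bar>g x\<bar> \<le> C * (x - c)\<^sup>2"
proof -
  have g1: "\<bar>g' y\<bar> \<le> C * (y - c)" if "c \<le> y" "y \<le> c + h" for y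
  proof (cases "y = c")
    case True then show ?thesis using z by simp
  next
    case False
    then have "c < y" using that by simp
    have "\<exists>z. c < z \<and> z < y \<and> g' y - g' c = (y - c) * g'' z"
      by (rule MVT2[OF \<open>c < y\<close>]) (use d' that in auto)
    then obtain z where "c < z" "z < y" "g' y - g' c = (y - c) * g'' z" by blast
    moreover have "\<bar>g'' z\<bar> \<le> C" using b \<open>c < z\<close> \<open>z < y\<close> that by simp
    ultimately show ?thesis using z \<open>c < y\<close> by (simp add: abs_mult mult.commute mult_left_mono)
  qed
  have C0: "C \<ge> 0" using b[of c] x by simp
  have "\<bar>g x\<bar> \<le> C * (x - c)\<^sup>2"
  proof (cases "x = c")
    case True then show ?thesis using z by simp
  next
    case False
    then have "c < x" using x by simp
    have "\<exists>y. c < y \<and> y < x \<and> g x - g c = (x - c) * g' y"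
      by (rule MVT2[OF \<open>c < x\<close>]) (use d x in auto)
    then obtain y where y: "c < y" "y < x" "g x - g c = (x - c) * g' y" by blast
    have "\<bar>g' y\<bar> \<le> C * (y - c)" using g1 y x by simp
    also have "\<dots> \<le> C * (x - c)" using y C0 by (simp add: mult_left_mono)
    finally have "\<bar>g x\<bar> \<le> (x - c) * (C * (x - c))"
      using y z \<open>c < x\<close> by (simp add: abs_mult mult_left_mono)
    then show ?thesis by (simp add: power2_eq_square mult_ac)
  qed
  then show ?thesis using g1 x by simp
qed


section \<open>The explicit solution\<close>

locale explicit_solution =
  fixes a s B :: real
  assumes a_ge_1: "1 \<le> a" and s_ge_pi_half: "pi / 2 \<le> s" and s_less_pi: "s < pi"
    and B_sin_s: "B * sin s = a + ln (1 + a)" and B_cos_s: "- B * s * cos s = a / (1 + a)"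
begin

definition "u_mid x = a + ln (a * x + (1 - a))"
definition "du_mid x = a / (a * x + (1 - a))"
definition "ddu_mid x = - (a / (a * x + (1 - a)))\<^sup>2"
definition "u_right x = B * sin ((- s) * x + 3 * s)"
definition "du_right x = - B * s * cos ((- s) * x + 3 * s)"
definition "ddu_right x = - s\<^sup>2 * (B * sin ((- s) * x + 3 * s))"

definition "sol x = (if x \<le> 1 then a * x else if x \<le> 2 then u_mid x else u_right x)"
definition "sol' x = (if x \<le> 1 then a else if x \<le> 2 then du_mid x else du_right x)"
definition "sol'' x = - (indicator {1<..<2} x * (sol' x)\<^sup>2 + s\<^sup>2 * (indicator {2<..<3} x * sol x))"

lemma s_pos: "s > 0" using s_ge_pi_half pi_gt_zero by linarith
lemma sin_s_pos: "sin s > 0"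
proof -
  have "0 < s" "s < pi" using s_pos s_less_pi by linarith+
  then show ?thesis by (rule sin_gt_zero)
qed
lemma B_pos: "B > 0"
proof -
  have "ln (1 + a) \<ge> 0" using a_ge_1 by simp
  then have p: "a + ln (1 + a) > 0" using a_ge_1 by linarith
  have "B = (a + ln (1 + a)) / sin s" using B_sin_s sin_s_pos by (simp add: eq_divide_eq)
  then show ?thesis using p sin_s_pos by simp
qed

lemma log_arg_pos: "a * x + (1 - a) > 0" if "x > 1 - 1 / (2 * a)"
proof -
  have "a * x > a * (1 - 1 / (2 * a))" using that a_ge_1 by (intro mult_strict_left_mono) auto
  also have "a * (1 - 1 / (2 * a)) = a - a * (1 / (2 * a))" by (simp add: right_diff_distrib)
  also have "a * (1 / (2 * a)) = 1 / 2" using a_ge_1 by simp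
  finally show ?thesis by simp
qed

lemma log_arg_ge_1: "x \<ge> 1 \<Longrightarrow> a * x + (1 - a) \<ge> 1"
proof -
  assume "x \<ge> 1"
  then have "a * 1 \<le> a * x" using a_ge_1 by (intro mult_left_mono) auto
  then show ?thesis by simp
qed

lemma u_mid_DERIV: "a * x + (1 - a) > 0 \<Longrightarrow> DERIV u_mid x :> du_mid x"
  unfolding u_mid_def[abs_def] du_mid_def by (auto intro!: derivative_eq_intros simp: field_simps)

lemma du_mid_DERIV: "a * x + (1 - a) > 0 \<Longrightarrow> DERIV du_mid x :> ddu_mid x"
  unfolding du_mid_def[abs_def] ddu_mid_def by (auto intro!: derivative_eq_intros simp: field_simps power2_eq_square)

lemma u_right_DERIV: "DERIV u_right x :> du_right x"
  unfolding u_right_def[abs_def] du_right_def by (auto intro!: derivative_eq_intros simp: field_simps)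

lemma du_right_DERIV: "DERIV du_right x :> ddu_right x"
  unfolding du_right_def[abs_def] ddu_right_def by (auto intro!: derivative_eq_intros simp: field_simps power2_eq_square)

lemma u_mid_1: "u_mid 1 = a" by (simp add: u_mid_def)
lemma du_mid_1: "du_mid 1 = a" by (simp add: du_mid_def)
lemma u_mid_right_2: "u_mid 2 = u_right 2"
proof -
  have 1: "a * 2 + (1 - a) = 1 + a" by simp
  have 2: "- s * 2 + 3 * s = s" by simp
  show ?thesis unfolding u_mid_def u_right_def 1 2 B_sin_s ..
qed
lemma du_mid_right_2: "du_mid 2 = du_right 2"
proof -
  have 1: "a * 2 + (1 - a) = 1 + a" by simp
  have 2: "- s * 2 + 3 * s = s" by simp
  show ?thesis unfolding du_mid_def du_right_def 1 2 B_cos_s ..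
qed

lemma continuous_on_ddu_mid: "continuous_on {1..2} ddu_mid"
proof -
  have "\<forall>x\<in>{1..2}. a * x + (1 - a) \<noteq> 0" using log_arg_ge_1 by force
  then show ?thesis unfolding ddu_mid_def[abs_def] by (intro continuous_intros) auto
qed

lemma continuous_on_du_mid: "continuous_on {1..2} du_mid"
  by (rule DERIV_atLeastAtMost_imp_continuous_on) (use du_mid_DERIV log_arg_ge_1 in \<open>force\<close>)
lemma continuous_on_u_mid: "continuous_on {1..2} u_mid"
  by (rule DERIV_atLeastAtMost_imp_continuous_on) (use u_mid_DERIV log_arg_ge_1 in \<open>force\<close>)
lemma continuous_on_du_right: "continuous_on S du_right"
  using u_right_DERIV du_right_DERIV by (meson DERIV_continuous_on has_field_derivative_at_within)
lemma continuous_on_u_right: "continuous_on S u_right"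
  using u_right_DERIV by (meson DERIV_continuous_on has_field_derivative_at_within)
lemma continuous_on_ddu_right: "continuous_on S ddu_right"
  unfolding ddu_right_def by (intro continuous_intros)

lemma borel_measurable_sol: "sol \<in> borel_measurable borel"
  unfolding sol_def[abs_def] u_mid_def u_right_def by measurable
lemma borel_measurable_sol': "sol' \<in> borel_measurable borel"
  unfolding sol'_def[abs_def] du_mid_def du_right_def by measurable
lemma borel_measurable_sol'': "sol'' \<in> borel_measurable borel"
  unfolding sol''_def[abs_def] using borel_measurable_sol' borel_measurable_sol by measurable

lemma sol_bounded: "bounded (sol ` {0<..<3})"
  by (rule piecewise_bounded[of 0 1 "\<lambda>x. a * x" 2 u_mid 3 u_right])
    (auto simp: sol_def continuous_on_u_mid continuous_on_u_right intro!: continuous_intros)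

lemma sol'_bounded: "bounded (sol' ` {0<..<3})"
  by (rule piecewise_bounded[of 0 1 "\<lambda>x. a" 2 du_mid 3 du_right])
    (auto simp: sol'_def continuous_on_du_mid continuous_on_du_right intro!: continuous_intros)

lemma sol''_bounded: "bounded (sol'' ` {0<..<3})"
proof (rule piecewise_bounded[of 0 1 "\<lambda>x. 0" 2 ddu_mid 3 ddu_right])
  show "continuous_on {1..2} ddu_mid" "continuous_on {2..3} ddu_right"
    by (rule continuous_on_ddu_mid continuous_on_ddu_right)+
qed (auto simp: sol''_def sol'_def sol_def ddu_mid_def du_mid_def ddu_right_def u_right_def)

lemma weak_deriv_sol: "weak_deriv 0 3 sol sol'"
proof (rule weak_deriv_piecewise[where ?U1.0="\<lambda>x. a * x" and ?G1.0="\<lambda>x. a" and ?U2.0=u_mid and ?G2.0=du_mid and ?U3.0=u_right and ?G3.0=du_right])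
  show "((\<lambda>x. a * x) has_real_derivative a) (at x)" for x by (auto intro!: derivative_eq_intros)
  show "(u_mid has_real_derivative du_mid x) (at x)" if "1 \<le> x" "x \<le> 2" for x
    using u_mid_DERIV log_arg_ge_1[OF that(1)] by simp
  show "continuous_on {0..1} (\<lambda>x. a)" by (intro continuous_intros)
qed (auto simp: sol_def sol'_def u_mid_1 u_mid_right_2 u_right_DERIV continuous_on_du_mid continuous_on_du_right borel_measurable_sol borel_measurable_sol')

lemma weak_deriv_sol': "weak_deriv 0 3 sol' sol''"
proof (rule weak_deriv_piecewise[where ?U1.0="\<lambda>x. a" and ?G1.0="\<lambda>x. 0" and ?U2.0=du_mid and ?G2.0=ddu_mid and ?U3.0=du_right and ?G3.0=ddu_right])
  show "(du_mid has_real_derivative ddu_mid x) (at x)" if "1 \<le> x" "x \<le> 2" for x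
    using du_mid_DERIV log_arg_ge_1[OF that(1)] by simp
  show "sol'' x = ddu_mid x" if "1 < x" "x < 2" for x
    using that by (auto simp: sol''_def sol'_def ddu_mid_def du_mid_def)
  show "sol'' x = ddu_right x" if "2 < x" "x < 3" for x
    using that by (auto simp: sol''_def sol_def ddu_right_def u_right_def)
  show "continuous_on {0..1} (\<lambda>x. 0::real)" by (intro continuous_intros)
qed (auto simp: sol''_def sol'_def du_mid_1 du_mid_right_2 du_right_DERIV continuous_on_ddu_mid continuous_on_ddu_right borel_measurable_sol'' borel_measurable_sol')

lemma L2_sol: "L2 0 3 sol" by (rule L2_bounded[OF borel_measurable_sol sol_bounded])
lemma L2_sol': "L2 0 3 sol'" by (rule L2_bounded[OF borel_measurable_sol' sol'_bounded])
lemma L2_sol'': "L2 0 3 sol''" by (rule L2_bounded[OF borel_measurable_sol'' sol''_bounded])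

lemma H1_sol': "H1 0 3 sol'" unfolding H1_def using L2_sol' L2_sol'' weak_deriv_sol' by blast
lemma H2_sol: "H2 0 3 sol" unfolding H2_def using L2_sol H1_sol' weak_deriv_sol by blast

lemma Linf_sol: "Linf 0 3 sol"
proof -
  obtain C where C: "\<forall>y\<in>sol ` {0<..<3}. \<bar>y\<bar> \<le> C" using sol_bounded unfolding bounded_real by blast
  have "Linf_norm 0 3 sol \<le> ereal C"
    unfolding Linf_norm_def
    by (rule esssup_I) (use borel_measurable_intv[OF borel_measurable_sol] C in \<open>auto intro!: AE_intvI\<close>)
  moreover have "ereal C < \<infinity>" by simp
  ultimately have "Linf_norm 0 3 sol < \<infinity>" by (rule le_less_trans)
  then show ?thesis unfolding Linf_def using borel_measurable_intv[OF borel_measurable_sol] by blast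
qed

lemma sol_ge_a: "3/2 < x \<Longrightarrow> x \<le> 2 \<Longrightarrow> sol x \<ge> a"
proof -
  assume x: "3/2 < x" "x \<le> 2"
  then have "a * x + (1 - a) \<ge> 1" using log_arg_ge_1 by simp
  then have "ln (a * x + (1 - a)) \<ge> 0" by simp
  then show ?thesis using x by (simp add: sol_def u_mid_def)
qed

lemma Linf_norm_sol_ge: "Linf_norm 0 3 sol \<ge> ereal a"
proof (rule ccontr)
  assume "\<not> ereal a \<le> Linf_norm 0 3 sol"
  then have lt: "Linf_norm 0 3 sol < ereal a" by simp
  have "AE x in intv 0 3. ereal \<bar>sol x\<bar> \<le> Linf_norm 0 3 sol"
    unfolding Linf_norm_def by (rule esssup_AE)
  then have "AE x in intv 0 3. x \<notin> {3/2<..<2}"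
  proof eventually_elim
    case (elim x)
    show ?case
    proof
      assume "x \<in> {3/2<..<2}"
      then have "sol x \<ge> a" using sol_ge_a by simp
      then have "ereal a \<le> ereal \<bar>sol x\<bar>" by simp
      from order_trans[OF this elim] lt show False by simp
    qed
  qed
  then have "emeasure (intv 0 3) {3/2<..<2} = 0"
  proof (subst (asm) AE_iff_measurable[where N="{3/2<..<2}"])
    show "{3/2<..<2::real} \<in> sets (intv 0 3)" unfolding intv_def by (auto simp: sets_restrict_space_iff)
    show "{x \<in> space (intv 0 3). \<not> x \<notin> {3 / 2<..<2::real}} = {3/2<..<2}" by (auto simp: space_intv)
  qed
  moreover have "emeasure (intv 0 3) {3/2<..<2} = ennreal (1/2)"
    unfolding intv_def by (subst emeasure_restrict_space) auto
  ultimately show False by simp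
qed

end


section \<open>Approximation by test functions\<close>

lemma step_up_below: "0 < d \<Longrightarrow> y \<le> c \<Longrightarrow> smooth_step ((y - c) / d) = 0"
  by (rule smooth_step_nonpos) (simp add: divide_nonpos_pos)
lemma step_up_above: "0 < d \<Longrightarrow> c + d \<le> y \<Longrightarrow> smooth_step ((y - c) / d) = 1"
  by (rule smooth_step_ge_1) (simp add: le_divide_eq)
lemma deriv_step_up_below: "0 < d \<Longrightarrow> y < c \<Longrightarrow> deriv smooth_step ((y - c) / d) = 0"
  by (rule deriv_smooth_step_outside) (simp add: divide_neg_pos)
lemma deriv_step_up_above: "0 < d \<Longrightarrow> c + d < y \<Longrightarrow> deriv smooth_step ((y - c) / d) = 0"
  by (rule deriv_smooth_step_outside) (simp add: less_divide_eq)
lemma step_down_above: "0 < d \<Longrightarrow> c \<le> y \<Longrightarrow> smooth_step ((c - y) / d) = 0"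
  by (rule smooth_step_nonpos) (simp add: divide_nonpos_pos)
lemma step_down_below: "0 < d \<Longrightarrow> y \<le> c - d \<Longrightarrow> smooth_step ((c - y) / d) = 1"
  by (rule smooth_step_ge_1) (simp add: le_divide_eq)
lemma deriv_step_down_below: "0 < d \<Longrightarrow> y < c - d \<Longrightarrow> deriv smooth_step ((c - y) / d) = 0"
  by (rule deriv_smooth_step_outside) (simp add: less_divide_eq)

lemma step_up_DERIV: "0 < d \<Longrightarrow> DERIV (\<lambda>y. smooth_step ((y - c) / d)) x :> deriv smooth_step ((x - c) / d) * (1 / d)"
proof -
  assume "0 < d"
  have i: "DERIV (\<lambda>y. (y - c) / d) x :> 1 / d" using \<open>0 < d\<close> by (auto intro!: derivative_eq_intros)
  show ?thesis using DERIV_chain2[OF smooth_step_DERIV i] .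
qed
lemma step_down_DERIV: "0 < d \<Longrightarrow> DERIV (\<lambda>y. smooth_step ((c - y) / d)) x :> deriv smooth_step ((c - x) / d) * (- 1 / d)"
proof -
  assume "0 < d"
  have i: "DERIV (\<lambda>y. (c - y) / d) x :> - 1 / d" using \<open>0 < d\<close> by (auto intro!: derivative_eq_intros)
  show ?thesis using DERIV_chain2[OF smooth_step_DERIV i] .
qed

lemma k_diff_on_step_up: "0 < d \<Longrightarrow> k_diff_on UNIV k (\<lambda>y. smooth_step ((y - c) / d))"
proof -
  assume d: "0 < d"
  have "k_diff_on {x. (1/d) * x + (- c / d) \<in> UNIV} k (\<lambda>y. smooth_step ((1/d) * y + (- c / d)))"
    by (rule k_diff_on_affine[OF open_UNIV k_diff_on_smooth_step])
  moreover have "(\<lambda>y. smooth_step ((1/d) * y + (- c / d))) = (\<lambda>y. smooth_step ((y - c) / d))"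
    by (rule ext) (simp add: diff_divide_distrib)
  ultimately show ?thesis by simp
qed
lemma k_diff_on_step_down: "0 < d \<Longrightarrow> k_diff_on UNIV k (\<lambda>y. smooth_step ((c - y) / d))"
proof -
  assume d: "0 < d"
  have "k_diff_on {x. (-1/d) * x + (c / d) \<in> UNIV} k (\<lambda>y. smooth_step ((-1/d) * y + (c / d)))"
    by (rule k_diff_on_affine[OF open_UNIV k_diff_on_smooth_step])
  moreover have "(\<lambda>y. smooth_step ((-1/d) * y + (c / d))) = (\<lambda>y. smooth_step ((c - y) / d))"
    by (rule ext) (simp add: diff_divide_distrib)
  ultimately show ?thesis by simp
qed

context explicit_solution
begin

definition "jump12 x = u_mid x - a * x"
definition "djump12 x = du_mid x - a"
definition "jump23 x = u_right x - u_mid x"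
definition "djump23 x = du_right x - du_mid x"
text \<open>\<open>approx d\<close> switches on the corrections \<open>jump12\<close> and \<open>jump23\<close> over \<open>[1, 1 + d]\<close> and
  \<open>[2, 2 + d]\<close>, which smooths the corners of \<open>sol\<close>, and cuts off over \<open>[d, 2 d]\<close> and
  \<open>[3 - 2 d, 3 - d]\<close>.\<close>

definition "approx d x = smooth_step ((x - d) / d) * smooth_step ((3 - d - x) / d) *
   (a * x + smooth_step ((x - 1) / d) * jump12 x + smooth_step ((x - 2) / d) * jump23 x)"

text \<open>An open set containing \<open>[1, \<infinity>)\<close> on which the logarithm in \<open>u_mid\<close> is smooth.\<close>

definition "mid_domain = {1 - 1 / (2 * a)<..}"

lemma open_mid_domain: "open mid_domain" by (simp add: mid_domain_def)
lemma mid_domain_log_arg_pos: "x \<in> mid_domain \<Longrightarrow> a * x + (1 - a) > 0" using log_arg_pos by (simp add: mid_domain_def)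
lemma mid_domain_gt_half: "x \<in> mid_domain \<Longrightarrow> x > 1/2"
proof -
  assume "x \<in> mid_domain"
  moreover have "1 / (2 * a) \<le> 1 / 2" using a_ge_1 by (simp add: field_simps)
  ultimately show ?thesis by (simp add: mid_domain_def)
qed
lemma lessThan_1_Un_mid_domain: "{..<1} \<union> mid_domain = UNIV"
proof -
  have pos: "1 / (2 * a) > 0" using a_ge_1 by simp
  have "x \<in> {..<1} \<union> mid_domain" for x
  proof (cases "x < 1")
    case False
    then have "1 - 1 / (2 * a) < x" using pos by linarith
    then show ?thesis by (simp add: mid_domain_def)
  qed simp
  then show ?thesis by blast
qed

lemma k_diff_on_u_mid: "k_diff_on mid_domain k u_mid"
proof -
  have "k_diff_on {x. a * x + (1 - a) \<in> {0<..}} k (\<lambda>x. ln (a * x + (1 - a)))"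
    by (rule k_diff_on_affine[OF open_greaterThan k_diff_on_ln])
  then have "k_diff_on mid_domain k (\<lambda>x. ln (a * x + (1 - a)))" by (rule k_diff_on_subset) (use mid_domain_log_arg_pos in auto)
  then have "k_diff_on mid_domain k (\<lambda>x. a + ln (a * x + (1 - a)))" by (rule k_diff_on_add[OF open_mid_domain k_diff_on_const])
  then show ?thesis by (simp add: u_mid_def[abs_def])
qed

lemma k_diff_on_u_right: "k_diff_on U k u_right"
proof -
  have "k_diff_on {x. (- s) * x + 3 * s \<in> UNIV} k (\<lambda>x. sin ((- s) * x + 3 * s))"
    by (rule k_diff_on_affine[OF open_UNIV]) (use k_diff_on_sin_cos in blast)
  then have "k_diff_on UNIV k (\<lambda>x. B * sin ((- s) * x + 3 * s))" by (intro k_diff_on_cmult) auto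
  then have "k_diff_on UNIV k u_right" by (simp add: u_right_def[abs_def])
  then show ?thesis by (rule k_diff_on_subset) simp
qed

lemma k_diff_on_jump12: "k_diff_on mid_domain k jump12"
proof -
  have "k_diff_on mid_domain k (\<lambda>x. u_mid x - a * x)" by (intro k_diff_on_diff open_mid_domain k_diff_on_u_mid k_diff_on_cmult k_diff_on_ident)
  then show ?thesis by (simp add: jump12_def[abs_def])
qed
lemma k_diff_on_jump23: "k_diff_on mid_domain k jump23"
proof -
  have "k_diff_on mid_domain k (\<lambda>x. u_right x - u_mid x)" by (intro k_diff_on_diff open_mid_domain k_diff_on_u_mid k_diff_on_u_right)
  then show ?thesis by (simp add: jump23_def[abs_def])
qed

lemma jump12_DERIV: "x \<in> mid_domain \<Longrightarrow> DERIV jump12 x :> djump12 x"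
proof -
  assume "x \<in> mid_domain"
  then have "DERIV u_mid x :> du_mid x" using u_mid_DERIV mid_domain_log_arg_pos by blast
  then have "DERIV (\<lambda>x. u_mid x - a * x) x :> du_mid x - a" by (auto intro!: derivative_eq_intros)
  then show ?thesis by (simp add: jump12_def[abs_def] djump12_def)
qed

lemma jump23_DERIV: "x \<in> mid_domain \<Longrightarrow> DERIV jump23 x :> djump23 x"
proof -
  assume "x \<in> mid_domain"
  then have "DERIV u_mid x :> du_mid x" using u_mid_DERIV mid_domain_log_arg_pos by blast
  then have "DERIV (\<lambda>x. u_right x - u_mid x) x :> du_right x - du_mid x" using u_right_DERIV by (auto intro!: derivative_eq_intros)
  then show ?thesis by (simp add: jump23_def[abs_def] djump23_def)
qed

context
  fixes d :: real
  assumes d0: "0 < d" and d4: "d \<le> 1/4"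
begin

lemma approx_lt_1: "y < 1 \<Longrightarrow> approx d y = smooth_step ((y - d) / d) * smooth_step ((3 - d - y) / d) * (a * y)"
  using step_up_below[OF d0, of y 1] step_up_below[OF d0, of y 2] by (simp add: approx_def)

lemma k_diff_on_approx: "k_diff_on UNIV k (approx d)"
proof -
  have up: "k_diff_on U k (\<lambda>y. smooth_step ((y - c) / d))" for U c
    using k_diff_on_subset[OF k_diff_on_step_up[OF d0]] by blast
  have down: "k_diff_on U k (\<lambda>y. smooth_step ((3 - d - y) / d))" for U
    using k_diff_on_subset[OF k_diff_on_step_down[OF d0]] by blast
  have lin: "k_diff_on U k (\<lambda>y. a * y)" if "open U" for U
    by (intro k_diff_on_cmult that k_diff_on_ident)
  have "k_diff_on {..<1} k (\<lambda>y. smooth_step ((y - d) / d) * smooth_step ((3 - d - y) / d) * (a * y))"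
    by (intro k_diff_on_mult open_lessThan up down lin)
  then have 1: "k_diff_on {..<1} k (approx d)"
    using k_diff_on_cong[OF open_lessThan, of 1 "approx d"] approx_lt_1 by simp
  have "k_diff_on mid_domain k (\<lambda>y. smooth_step ((y - d) / d) * smooth_step ((3 - d - y) / d) *
     (a * y + smooth_step ((y - 1) / d) * jump12 y + smooth_step ((y - 2) / d) * jump23 y))"
    by (intro k_diff_on_mult k_diff_on_add open_mid_domain up down lin k_diff_on_jump12 k_diff_on_jump23)
  then have 2: "k_diff_on mid_domain k (approx d)" by (simp add: approx_def[abs_def])
  show ?thesis using k_diff_on_Un[OF 1 2] lessThan_1_Un_mid_domain by simp
qed

lemma approx_outside: "y \<notin> {d..3-d} \<Longrightarrow> approx d y = 0"
proof -
  assume "y \<notin> {d..3-d}"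
  then consider "y < d" | "y > 3 - d" by force
  then show ?thesis
  proof cases
    case 1 then show ?thesis using step_up_below[OF d0, of y d] by (simp add: approx_def)
  next
    case 2 then show ?thesis using step_down_above[OF d0, of "3 - d" y] by (simp add: approx_def)
  qed
qed

lemma test_fun_approx: "test_fun 0 3 (approx d)"
  unfolding test_fun_def
proof (intro conjI)
  show "\<forall>k x. (deriv ^^ k) (approx d) differentiable (at x)"
  proof (intro allI)
    fix k :: nat and x :: real
    show "(deriv ^^ k) (approx d) differentiable (at x)"
      using k_diff_on_higher_deriv_differentiable[OF k_diff_on_approx[of "Suc k"], of k x] by simp
  qed
  show "\<exists>K. compact K \<and> K \<subseteq> {0<..<3} \<and> (\<forall>x. x \<notin> K \<longrightarrow> approx d x = 0)"
    by (rule exI[of _ "{d..3-d}"]) (use d0 approx_outside in auto)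
qed

lemma approx_left: "y < 1 \<Longrightarrow> approx d y = smooth_step ((y - d) / d) * (a * y)"
  using approx_lt_1 step_down_below[OF d0, of y "3 - d"] d4 by simp

lemma approx_mid: "1 - 1 / (2 * a) < y \<Longrightarrow> y < 2 \<Longrightarrow> approx d y = a * y + smooth_step ((y - 1) / d) * jump12 y"
proof -
  assume y: "1 - 1 / (2 * a) < y" "y < 2"
  then have "y > 1/2" using mid_domain_gt_half by (simp add: mid_domain_def)
  then have "smooth_step ((y - d) / d) = 1" using step_up_above[OF d0, of d y] d4 by simp
  moreover have "smooth_step ((3 - d - y) / d) = 1" using step_down_below[OF d0, of y "3 - d"] d4 y by simp
  moreover have "smooth_step ((y - 2) / d) = 0" using step_up_below[OF d0, of y 2] y by simp
  ultimately show ?thesis by (simp add: approx_def)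
qed

lemma approx_junction: "3/2 < y \<Longrightarrow> y < 5/2 \<Longrightarrow> approx d y = u_mid y + smooth_step ((y - 2) / d) * jump23 y"
proof -
  assume y: "3/2 < y" "y < 5/2"
  have "smooth_step ((y - d) / d) = 1" using step_up_above[OF d0, of d y] d4 y by simp
  moreover have "smooth_step ((3 - d - y) / d) = 1" using step_down_below[OF d0, of y "3 - d"] d4 y by simp
  moreover have "smooth_step ((y - 1) / d) = 1" using step_up_above[OF d0, of 1 y] d4 y by simp
  ultimately show ?thesis by (simp add: approx_def jump12_def)
qed

lemma approx_right: "9/4 < y \<Longrightarrow> approx d y = smooth_step ((3 - d - y) / d) * u_right y"
proof -
  assume y: "9/4 < y"
  have "smooth_step ((y - d) / d) = 1" using step_up_above[OF d0, of d y] d4 y by simp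
  moreover have "smooth_step ((y - 1) / d) = 1" using step_up_above[OF d0, of 1 y] d4 y by simp
  moreover have "smooth_step ((y - 2) / d) = 1" using step_up_above[OF d0, of 2 y] d4 y by simp
  ultimately show ?thesis by (simp add: approx_def jump12_def jump23_def)
qed

lemma deriv_approx_left: "x < 1 \<Longrightarrow> deriv (approx d) x = deriv smooth_step ((x - d) / d) * (1 / d) * (a * x) + a * smooth_step ((x - d) / d)"
proof -
  assume x: "x < 1"
  have D: "DERIV (\<lambda>y. smooth_step ((y - d) / d) * (a * y)) x :> deriv smooth_step ((x - d) / d) * (1 / d) * (a * x) + a * smooth_step ((x - d) / d)"
    using DERIV_mult[OF step_up_DERIV[OF d0] DERIV_cmult[OF DERIV_ident, of a]] by simp
  have "DERIV (approx d) x :> deriv smooth_step ((x - d) / d) * (1 / d) * (a * x) + a * smooth_step ((x - d) / d)"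
    by (rule has_field_derivative_transform_within_open[OF D, of "{..<1}"]) (use x approx_left in auto)
  then show ?thesis by (rule DERIV_imp_deriv)
qed

lemma deriv_approx_mid: "1 - 1 / (2 * a) < x \<Longrightarrow> x < 2 \<Longrightarrow>
  deriv (approx d) x = a + (deriv smooth_step ((x - 1) / d) * (1 / d) * jump12 x + djump12 x * smooth_step ((x - 1) / d))"
proof -
  assume x: "1 - 1 / (2 * a) < x" "x < 2"
  then have "x \<in> mid_domain" by (simp add: mid_domain_def)
  have D: "DERIV (\<lambda>y. a * y + smooth_step ((y - 1) / d) * jump12 y) x :>
     a + (deriv smooth_step ((x - 1) / d) * (1 / d) * jump12 x + djump12 x * smooth_step ((x - 1) / d))"
    using DERIV_add[OF DERIV_cmult[OF DERIV_ident] DERIV_mult[OF step_up_DERIV[OF d0] jump12_DERIV[OF \<open>x \<in> mid_domain\<close>]], of a] by simp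
  have "DERIV (approx d) x :> a + (deriv smooth_step ((x - 1) / d) * (1 / d) * jump12 x + djump12 x * smooth_step ((x - 1) / d))"
    by (rule has_field_derivative_transform_within_open[OF D, of "{1 - 1 / (2 * a)<..<2}"]) (use x approx_mid in auto)
  then show ?thesis by (rule DERIV_imp_deriv)
qed

lemma deriv_approx_junction: "3/2 < x \<Longrightarrow> x < 5/2 \<Longrightarrow>
  deriv (approx d) x = du_mid x + (deriv smooth_step ((x - 2) / d) * (1 / d) * jump23 x + djump23 x * smooth_step ((x - 2) / d))"
proof -
  assume x: "3/2 < x" "x < 5/2"
  have pos: "1 / (2 * a) > 0" using a_ge_1 by simp
  have "1 - 1 / (2 * a) < x" using pos x by linarith
  then have "x \<in> mid_domain" by (simp add: mid_domain_def)
  have "DERIV u_mid x :> du_mid x" using u_mid_DERIV mid_domain_log_arg_pos \<open>x \<in> mid_domain\<close> by blast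
  then have D: "DERIV (\<lambda>y. u_mid y + smooth_step ((y - 2) / d) * jump23 y) x :>
     du_mid x + (deriv smooth_step ((x - 2) / d) * (1 / d) * jump23 x + djump23 x * smooth_step ((x - 2) / d))"
    by (rule DERIV_add[OF _ DERIV_mult[OF step_up_DERIV[OF d0] jump23_DERIV[OF \<open>x \<in> mid_domain\<close>]]])
  have "DERIV (approx d) x :> du_mid x + (deriv smooth_step ((x - 2) / d) * (1 / d) * jump23 x + djump23 x * smooth_step ((x - 2) / d))"
    by (rule has_field_derivative_transform_within_open[OF D, of "{3/2<..<5/2}"]) (use x approx_junction in auto)
  then show ?thesis by (rule DERIV_imp_deriv)
qed

lemma deriv_approx_right: "9/4 < x \<Longrightarrow>
  deriv (approx d) x = deriv smooth_step ((3 - d - x) / d) * (- 1 / d) * u_right x + du_right x * smooth_step ((3 - d - x) / d)"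
proof -
  assume x: "9/4 < x"
  have D: "DERIV (\<lambda>y. smooth_step ((3 - d - y) / d) * u_right y) x :>
     deriv smooth_step ((3 - d - x) / d) * (- 1 / d) * u_right x + du_right x * smooth_step ((3 - d - x) / d)"
    by (rule DERIV_mult[OF step_down_DERIV[OF d0] u_right_DERIV])
  have "DERIV (approx d) x :> deriv smooth_step ((3 - d - x) / d) * (- 1 / d) * u_right x + du_right x * smooth_step ((3 - d - x) / d)"
    by (rule has_field_derivative_transform_within_open[OF D, of "{9/4<..}"]) (use x approx_right in auto)
  then show ?thesis by (rule DERIV_imp_deriv)
qed

end

end


lemma abs_mult_le: "\<bar>p\<bar> \<le> P \<Longrightarrow> \<bar>q\<bar> \<le> Q \<Longrightarrow> \<bar>p * q\<bar> \<le> P * (Q::real)"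
  unfolding abs_mult by (rule mult_mono) auto

lemma smooth_step_minus_1_abs: "\<bar>smooth_step t - 1\<bar> \<le> 1"
  using smooth_step_nonneg[of t] smooth_step_le_1[of t] by simp

text \<open>The factor \<open>1 / d\<close> produced by the chain rule is absorbed because \<open>D\<close> vanishes to
  first order and the step happens within distance \<open>e \<le> 2 d\<close>.\<close>

lemma cutoff_error_bound:
  fixes d e r t C D D' :: real
  assumes "0 < d" "0 \<le> e" "e \<le> 1" "\<bar>r\<bar> = 1" and D: "\<bar>D\<bar> \<le> C * e" and D': "\<bar>D'\<bar> \<le> C"
    and zone: "e \<le> 2 * d \<or> deriv smooth_step t = 0"
  shows "\<bar>(smooth_step t - 1) * D\<bar> \<le> C"
    and "\<bar>deriv smooth_step t * (r / d) * D + (smooth_step t - 1) * D'\<bar> \<le> (2 * step_slope_bound + 1) * C"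
proof -
  have C: "0 \<le> C" using D' by linarith
  have "\<bar>(smooth_step t - 1) * D\<bar> \<le> 1 * (C * e)"
    by (rule abs_mult_le[OF smooth_step_minus_1_abs D])
  moreover have "C * e \<le> C" using C \<open>e \<le> 1\<close> by (simp add: mult_left_le)
  ultimately show "\<bar>(smooth_step t - 1) * D\<bar> \<le> C" by simp
  have "\<bar>deriv smooth_step t * ((r / d) * D)\<bar> \<le> step_slope_bound * (2 * C)"
  proof (cases "deriv smooth_step t = 0")
    case True then show ?thesis using C step_slope_bound_nonneg by simp
  next
    case False
    then have "e \<le> 2 * d" using zone by blast
    then have "C * e \<le> C * (2 * d)" using C by (rule mult_left_mono)
    then have "\<bar>(r / d) * D\<bar> \<le> 2 * C"
      using D \<open>0 < d\<close> \<open>\<bar>r\<bar> = 1\<close> by (simp add: abs_mult field_simps)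
    then show ?thesis by (rule abs_mult_le[OF step_slope_bound])
  qed
  moreover have "\<bar>(smooth_step t - 1) * D'\<bar> \<le> 1 * C"
    by (rule abs_mult_le[OF smooth_step_minus_1_abs D'])
  ultimately show "\<bar>deriv smooth_step t * (r / d) * D + (smooth_step t - 1) * D'\<bar> \<le> (2 * step_slope_bound + 1) * C"
    using abs_triangle_ineq[of "deriv smooth_step t * (r / d) * D" "(smooth_step t - 1) * D'"]
    by (simp add: algebra_simps)
qed

context explicit_solution
begin

lemma ddu_mid_bound: "1 \<le> x \<Longrightarrow> \<bar>ddu_mid x\<bar> \<le> a\<^sup>2"
proof -
  assume x: "1 \<le> x"
  have g: "a * x + (1 - a) \<ge> 1" using log_arg_ge_1[OF x] .
  have "\<bar>a / (a * x + (1 - a))\<bar> \<le> a" using g a_ge_1 by (simp add: divide_le_eq abs_le_iff) (smt (verit) mult_le_cancel_left1)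
  then have "\<bar>a / (a * x + (1 - a))\<bar>\<^sup>2 \<le> a\<^sup>2" by (rule power_mono) simp
  then have "(a / (a * x + (1 - a)))\<^sup>2 \<le> a\<^sup>2" by (simp only: power2_abs)
  then show ?thesis by (simp add: ddu_mid_def)
qed

lemma ddu_right_bound: "\<bar>ddu_right x\<bar> \<le> s\<^sup>2 * B"
proof -
  have "\<bar>ddu_right x\<bar> = s\<^sup>2 * B * \<bar>sin ((- s) * x + 3 * s)\<bar>" using B_pos by (simp add: ddu_right_def abs_mult)
  also have "\<dots> \<le> s\<^sup>2 * B * 1" using B_pos by (intro mult_left_mono) auto
  finally show ?thesis by simp
qed

lemma djump12_DERIV: "1 \<le> x \<Longrightarrow> DERIV djump12 x :> ddu_mid x"
proof -
  assume "1 \<le> x"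
  then have "DERIV du_mid x :> ddu_mid x" using du_mid_DERIV log_arg_ge_1 by force
  then have "DERIV (\<lambda>x. du_mid x - a) x :> ddu_mid x - 0" by (intro DERIV_diff) auto
  then show ?thesis by (simp add: djump12_def[abs_def])
qed

lemma djump23_DERIV: "1 \<le> x \<Longrightarrow> DERIV djump23 x :> ddu_right x - ddu_mid x"
proof -
  assume "1 \<le> x"
  then have "DERIV du_mid x :> ddu_mid x" using du_mid_DERIV log_arg_ge_1 by force
  then have "DERIV (\<lambda>x. du_right x - du_mid x) x :> ddu_right x - ddu_mid x" using du_right_DERIV by (intro DERIV_diff) auto
  then show ?thesis by (simp add: djump23_def[abs_def])
qed

lemma ge_1_in_mid_domain: "1 \<le> x \<Longrightarrow> x \<in> mid_domain"
proof -
  assume "1 \<le> x"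
  moreover have "1 / (2 * a) > 0" using a_ge_1 by simp
  ultimately have "1 - 1 / (2 * a) < x" by linarith
  then show ?thesis by (simp add: mid_domain_def)
qed

lemma jump12_bound: "1 \<le> x \<Longrightarrow> x \<le> 2 \<Longrightarrow> \<bar>djump12 x\<bar> \<le> a\<^sup>2 * (x - 1) \<and> \<bar>jump12 x\<bar> \<le> a\<^sup>2 * (x - 1)\<^sup>2"
proof (rule taylor_bound_order2[where g=jump12 and g'=djump12 and g''=ddu_mid and c=1 and h=1])
  show "DERIV jump12 y :> djump12 y" if "1 \<le> y" "y \<le> 1 + 1" for y using jump12_DERIV ge_1_in_mid_domain that by blast
  show "DERIV djump12 y :> ddu_mid y" if "1 \<le> y" "y \<le> 1 + 1" for y using djump12_DERIV that by blast
  show "\<bar>ddu_mid y\<bar> \<le> a\<^sup>2" if "1 \<le> y" "y \<le> 1 + 1" for y using ddu_mid_bound that by blast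
  show "jump12 1 = 0" by (simp add: jump12_def u_mid_1)
  show "djump12 1 = 0" by (simp add: djump12_def du_mid_1)
qed auto

definition "C23 = s\<^sup>2 * B + a\<^sup>2"

lemma jump23_bound: "2 \<le> x \<Longrightarrow> x \<le> 3 \<Longrightarrow> \<bar>djump23 x\<bar> \<le> C23 * (x - 2) \<and> \<bar>jump23 x\<bar> \<le> C23 * (x - 2)\<^sup>2"
proof (rule taylor_bound_order2[where g=jump23 and g'=djump23 and g''="\<lambda>y. ddu_right y - ddu_mid y" and c=2 and h=1])
  show "DERIV jump23 y :> djump23 y" if "2 \<le> y" "y \<le> 2 + 1" for y using jump23_DERIV ge_1_in_mid_domain that by simp
  show "DERIV djump23 y :> ddu_right y - ddu_mid y" if "2 \<le> y" "y \<le> 2 + 1" for y using djump23_DERIV that by simp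
  show "\<bar>ddu_right y - ddu_mid y\<bar> \<le> C23" if "2 \<le> y" "y \<le> 2 + 1" for y
    using ddu_right_bound[of y] ddu_mid_bound[of y] that unfolding C23_def by linarith
  show "jump23 2 = 0" by (simp add: jump23_def u_mid_right_2)
  show "djump23 2 = 0" by (simp add: djump23_def du_mid_right_2)
qed auto

lemma C23_nonneg: "C23 \<ge> 0" using B_pos by (simp add: C23_def)

lemma u_right_near_3: "x \<le> 3 \<Longrightarrow> \<bar>u_right x\<bar> \<le> B * s * (3 - x)"
proof -
  assume x: "x \<le> 3"
  have "\<bar>sin ((- s) * x + 3 * s)\<bar> \<le> \<bar>(- s) * x + 3 * s\<bar>" by (rule abs_sin_x_le_abs_x)
  also have "\<bar>(- s) * x + 3 * s\<bar> = s * (3 - x)" using s_pos x by (simp add: algebra_simps)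
  finally show ?thesis using B_pos by (simp add: u_right_def abs_mult mult.assoc mult_left_mono)
qed

lemma du_right_bound: "\<bar>du_right x\<bar> \<le> B * s"
proof -
  have "\<bar>du_right x\<bar> = B * s * \<bar>cos ((- s) * x + 3 * s)\<bar>" using B_pos s_pos by (simp add: du_right_def abs_mult)
  also have "\<dots> \<le> B * s * 1" using B_pos s_pos by (intro mult_left_mono) auto
  finally show ?thesis by simp
qed

context
  fixes d :: real
  assumes d0: "0 < d" and d4: "d \<le> 1/4"
begin

lemma approx_error_left:
  assumes "0 < x" "x < 1"
  shows "approx d x - sol x = (smooth_step ((x - d) / d) - 1) * (a * x)"
    and "deriv (approx d) x - sol' x =
      deriv smooth_step ((x - d) / d) * (1 / d) * (a * x) + (smooth_step ((x - d) / d) - 1) * a"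
  using assms approx_left[OF d0 d4] deriv_approx_left[OF d0 d4]
  by (simp_all add: sol_def sol'_def algebra_simps)

lemma approx_error_mid:
  assumes "1 \<le> x" "x \<le> 3/2"
  shows "approx d x - sol x = (smooth_step ((x - 1) / d) - 1) * jump12 x"
    and "deriv (approx d) x - sol' x =
      deriv smooth_step ((x - 1) / d) * (1 / d) * jump12 x + (smooth_step ((x - 1) / d) - 1) * djump12 x"
proof -
  have x: "1 - 1 / (2 * a) < x" "x < 2"
    using ge_1_in_mid_domain[OF assms(1)] assms(2) by (simp_all add: mid_domain_def)
  have "sol x = a * x + jump12 x" "sol' x = a + djump12 x"
    using assms by (auto simp: sol_def sol'_def jump12_def djump12_def u_mid_1 du_mid_1)
  then show "approx d x - sol x = (smooth_step ((x - 1) / d) - 1) * jump12 x"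
    "deriv (approx d) x - sol' x =
      deriv smooth_step ((x - 1) / d) * (1 / d) * jump12 x + (smooth_step ((x - 1) / d) - 1) * djump12 x"
    using approx_mid[OF d0 d4 x] deriv_approx_mid[OF d0 d4 x] by (simp_all add: algebra_simps)
qed

lemma approx_exact_before_2:
  assumes "3/2 < x" "x \<le> 2"
  shows "approx d x = sol x" "deriv (approx d) x = sol' x"
proof -
  have x: "3/2 < x" "x < 5/2" using assms by simp_all
  have "smooth_step ((x - 2) / d) * jump23 x = 0 \<and>
      deriv smooth_step ((x - 2) / d) * (1 / d) * jump23 x + djump23 x * smooth_step ((x - 2) / d) = 0"
  proof (cases "x = 2")
    case True
    then show ?thesis by (simp add: jump23_def u_mid_right_2 djump23_def du_mid_right_2)
  next
    case False
    then show ?thesis using assms step_up_below[OF d0, of x 2] deriv_step_up_below[OF d0, of x 2] by simp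
  qed
  then show "approx d x = sol x" "deriv (approx d) x = sol' x"
    using assms approx_junction[OF d0 d4 x] deriv_approx_junction[OF d0 d4 x] by (simp_all add: sol_def sol'_def)
qed

lemma approx_error_junction:
  assumes "2 < x" "x < 5/2"
  shows "approx d x - sol x = (smooth_step ((x - 2) / d) - 1) * jump23 x"
    and "deriv (approx d) x - sol' x =
      deriv smooth_step ((x - 2) / d) * (1 / d) * jump23 x + (smooth_step ((x - 2) / d) - 1) * djump23 x"
  using assms approx_junction[OF d0 d4, of x] deriv_approx_junction[OF d0 d4, of x]
  by (simp_all add: sol_def sol'_def jump23_def djump23_def algebra_simps)

lemma approx_error_right:
  assumes "5/2 \<le> x"
  shows "approx d x - sol x = (smooth_step ((3 - d - x) / d) - 1) * u_right x"
    and "deriv (approx d) x - sol' x =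
      deriv smooth_step ((3 - d - x) / d) * (- 1 / d) * u_right x + (smooth_step ((3 - d - x) / d) - 1) * du_right x"
  using assms approx_right[OF d0 d4, of x] deriv_approx_right[OF d0 d4, of x]
  by (simp_all add: sol_def sol'_def algebra_simps)

lemma approx_error_left_bound:
  assumes "0 < x" "x < 1"
  shows "\<bar>approx d x - sol x\<bar> \<le> a \<and> \<bar>deriv (approx d) x - sol' x\<bar> \<le> (2 * step_slope_bound + 1) * a"
proof -
  have "x \<le> 2 * d \<or> deriv smooth_step ((x - d) / d) = 0"
    using deriv_step_up_above[OF d0, of d x] by linarith
  then show ?thesis unfolding approx_error_left[OF assms]
    by (intro conjI cutoff_error_bound[where e=x and r=1 and D="a * x" and C=a and D'=a])
      (use assms d0 a_ge_1 in \<open>auto simp: abs_mult\<close>)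
qed

lemma approx_error_mid_bound:
  assumes "1 \<le> x" "x \<le> 3/2"
  shows "\<bar>approx d x - sol x\<bar> \<le> a\<^sup>2 \<and> \<bar>deriv (approx d) x - sol' x\<bar> \<le> (2 * step_slope_bound + 1) * a\<^sup>2"
proof -
  have "a\<^sup>2 * (x - 1)\<^sup>2 \<le> a\<^sup>2 * (x - 1)" "a\<^sup>2 * (x - 1) \<le> a\<^sup>2"
    using assms by (auto intro!: mult_left_mono mult_left_le simp: power2_eq_square mult_left_le_one_le)
  with assms jump12_bound[of x] have "\<bar>jump12 x\<bar> \<le> a\<^sup>2 * (x - 1)" "\<bar>djump12 x\<bar> \<le> a\<^sup>2"
    by auto
  moreover have "x - 1 \<le> 2 * d \<or> deriv smooth_step ((x - 1) / d) = 0"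
    using deriv_step_up_above[OF d0, of 1 x] d0 by linarith
  ultimately show ?thesis unfolding approx_error_mid[OF assms]
    by (intro conjI cutoff_error_bound[where e="x - 1" and r=1 and C="a\<^sup>2"]) (use assms d0 in auto)
qed

lemma approx_error_junction_bound:
  assumes "2 < x" "x < 5/2"
  shows "\<bar>approx d x - sol x\<bar> \<le> C23 \<and> \<bar>deriv (approx d) x - sol' x\<bar> \<le> (2 * step_slope_bound + 1) * C23"
proof -
  have "C23 * (x - 2)\<^sup>2 \<le> C23 * (x - 2)" "C23 * (x - 2) \<le> C23"
    using assms C23_nonneg by (auto intro!: mult_left_mono mult_left_le simp: power2_eq_square mult_left_le_one_le)
  with assms jump23_bound[of x] have "\<bar>jump23 x\<bar> \<le> C23 * (x - 2)" "\<bar>djump23 x\<bar> \<le> C23"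
    by auto
  moreover have "x - 2 \<le> 2 * d \<or> deriv smooth_step ((x - 2) / d) = 0"
    using deriv_step_up_above[OF d0, of 2 x] d0 by linarith
  ultimately show ?thesis unfolding approx_error_junction[OF assms]
    by (intro conjI cutoff_error_bound[where e="x - 2" and r=1 and C=C23]) (use assms d0 in auto)
qed

lemma approx_error_right_bound:
  assumes "5/2 \<le> x" "x < 3"
  shows "\<bar>approx d x - sol x\<bar> \<le> B * s \<and>
    \<bar>deriv (approx d) x - sol' x\<bar> \<le> (2 * step_slope_bound + 1) * (B * s)"
proof -
  have "3 - x \<le> 2 * d \<or> deriv smooth_step ((3 - d - x) / d) = 0"
    using deriv_step_down_below[OF d0, of x "3 - d"] by linarith
  with u_right_near_3[of x] du_right_bound[of x] show ?thesis unfolding approx_error_right[OF assms(1)]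
    by (intro conjI cutoff_error_bound[where e="3 - x" and r="-1" and C="B * s"]) (use assms d0 in auto)
qed

end

definition "error_const = a + a\<^sup>2 + C23 + B * s"

lemma approx_error_bounded:
  assumes d: "0 < d" "d \<le> 1/4" and x: "0 < x" "x < 3"
  shows "\<bar>approx d x - sol x\<bar> \<le> error_const \<and>
    \<bar>deriv (approx d) x - sol' x\<bar> \<le> (2 * step_slope_bound + 1) * error_const"
proof -
  have C: "0 \<le> a" "0 \<le> a\<^sup>2" "0 \<le> C23" "0 \<le> B * s"
    using a_ge_1 C23_nonneg B_pos s_pos by auto
  have mono: "(2 * step_slope_bound + 1) * C \<le> (2 * step_slope_bound + 1) * error_const"
    if "C \<le> error_const" for C
    using that step_slope_bound_nonneg by (intro mult_left_mono) auto
  have bound: "\<bar>approx d x - sol x\<bar> \<le> C \<and>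
      \<bar>deriv (approx d) x - sol' x\<bar> \<le> (2 * step_slope_bound + 1) * C \<Longrightarrow> C \<le> error_const \<Longrightarrow> ?thesis"
    for C using mono by fastforce
  consider "x < 1" | "1 \<le> x" "x \<le> 3/2" | "3/2 < x" "x \<le> 2" | "2 < x" "x < 5/2" | "5/2 \<le> x"
    by linarith
  then show ?thesis
  proof cases
    case 1
    show ?thesis by (rule bound[OF approx_error_left_bound[OF d x(1) 1]]) (auto simp: error_const_def C)
  next
    case 2
    show ?thesis by (rule bound[OF approx_error_mid_bound[OF d 2]]) (auto simp: error_const_def C)
  next
    case 3
    show ?thesis using approx_exact_before_2[OF d 3] by (intro bound[of 0]) (auto simp: error_const_def C)
  next
    case 4
    show ?thesis by (rule bound[OF approx_error_junction_bound[OF d 4]]) (auto simp: error_const_def C)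
  next
    case 5
    show ?thesis by (rule bound[OF approx_error_right_bound[OF d 5 x(2)]]) (auto simp: error_const_def C)
  qed
qed

lemma approx_exact_for_small_width:
  assumes x: "0 < x" "x < 3"
  shows "\<exists>e>0. \<forall>d. 0 < d \<longrightarrow> d \<le> 1/4 \<longrightarrow> d < e \<longrightarrow> approx d x = sol x \<and> deriv (approx d) x = sol' x"
proof -
  consider "x < 1" | "x = 1" | "1 < x \<and> x \<le> 3/2" | "3/2 < x \<and> x \<le> 2" | "2 < x \<and> x < 5/2" | "5/2 \<le> x"
    by linarith
  then show ?thesis
  proof cases
    case 1
    have "approx d x = sol x \<and> deriv (approx d) x = sol' x" if "0 < d" "d \<le> 1/4" "d < x / 2" for d
      using approx_error_left[OF that(1,2) x(1) 1] that
        step_up_above[OF that(1), of d x] deriv_step_up_above[OF that(1), of d x] by simp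
    then show ?thesis using x by (intro exI[of _ "x / 2"]) auto
  next
    case 2
    then have "approx d x = sol x \<and> deriv (approx d) x = sol' x" if "0 < d" "d \<le> 1/4" for d
      using approx_error_mid[OF that, of x] by (simp add: jump12_def u_mid_1 djump12_def du_mid_1)
    then show ?thesis by (intro exI[of _ 1]) auto
  next
    case 3
    have "approx d x = sol x \<and> deriv (approx d) x = sol' x" if "0 < d" "d \<le> 1/4" "d < x - 1" for d
      using approx_error_mid[OF that(1,2), of x] 3 that
        step_up_above[OF that(1), of 1 x] deriv_step_up_above[OF that(1), of 1 x] by simp
    then show ?thesis using 3 by (intro exI[of _ "x - 1"]) auto
  next
    case 4
    then show ?thesis using approx_exact_before_2 by (intro exI[of _ 1]) auto
  next
    case 5
    have "approx d x = sol x \<and> deriv (approx d) x = sol' x" if "0 < d" "d \<le> 1/4" "d < x - 2" for d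
      using approx_error_junction[OF that(1,2), of x] 5 that
        step_up_above[OF that(1), of 2 x] deriv_step_up_above[OF that(1), of 2 x] by simp
    then show ?thesis using 5 by (intro exI[of _ "x - 2"]) auto
  next
    case 6
    have "approx d x = sol x \<and> deriv (approx d) x = sol' x" if "0 < d" "d \<le> 1/4" "d < (3 - x) / 2" for d
      using approx_error_right[OF that(1,2) 6] that
        step_down_below[OF that(1), of x "3 - d"] deriv_step_down_below[OF that(1), of x "3 - d"] by simp
    then show ?thesis using x by (intro exI[of _ "(3 - x) / 2"]) auto
  qed
qed

end

definition cutoff_width :: "nat \<Rightarrow> real" where "cutoff_width k = 1 / (real k + 4)"

lemma cutoff_width_pos: "0 < cutoff_width k" by (simp add: cutoff_width_def)
lemma cutoff_width_le: "cutoff_width k \<le> 1/4" by (simp add: cutoff_width_def field_simps)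
lemma cutoff_width_tendsto_0: "cutoff_width \<longlonglongrightarrow> 0"
proof -
  have "(\<lambda>k. 1 / (real k + 4)) \<longlonglongrightarrow> 0"
    using LIMSEQ_ignore_initial_segment[OF lim_inverse_n', of 4] by (simp add: add.commute)
  then show ?thesis by (simp add: cutoff_width_def[abs_def])
qed
lemma eventually_cutoff_width_less: "e > 0 \<Longrightarrow> \<forall>\<^sub>F k in sequentially. cutoff_width k < e"
  using order_tendstoD(2)[OF cutoff_width_tendsto_0] by blast

context explicit_solution
begin

definition "approx_seq k = approx (cutoff_width k)"

lemma test_fun_approx_seq: "test_fun 0 3 (approx_seq k)"
  unfolding approx_seq_def by (rule test_fun_approx[OF cutoff_width_pos cutoff_width_le])

lemma eventually_approx_seq_exact: "0 < x \<Longrightarrow> x < 3 \<Longrightarrow> \<forall>\<^sub>F k in sequentially. approx_seq k x = sol x \<and> deriv (approx_seq k) x = sol' x"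
proof -
  assume x: "0 < x" "x < 3"
  obtain e where e: "e > 0" "\<And>d. 0 < d \<Longrightarrow> d \<le> 1/4 \<Longrightarrow> d < e \<Longrightarrow> approx d x = sol x \<and> deriv (approx d) x = sol' x"
    using approx_exact_for_small_width[OF x] by blast
  from eventually_cutoff_width_less[OF e(1)] show ?thesis
    by eventually_elim (use e(2) cutoff_width_pos cutoff_width_le in \<open>auto simp: approx_seq_def\<close>)
qed

lemma approx_seq_L2_tendsto: "(\<lambda>k. \<integral>x. (approx_seq k x - sol x)\<^sup>2 \<partial>intv 0 3) \<longlonglongrightarrow> 0"
proof (rule integral_sq_tendsto_0[where K=error_const])
  show "(\<lambda>x. approx_seq k x - sol x) \<in> borel_measurable borel" for k
    using test_fun_measurable[OF test_fun_approx_seq] borel_measurable_sol by (intro borel_measurable_diff) auto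
  show "\<bar>approx_seq k x - sol x\<bar> \<le> error_const" if "0 < x" "x < 3" for k x
    using approx_error_bounded[OF cutoff_width_pos cutoff_width_le that] by (simp add: approx_seq_def)
  show "\<forall>\<^sub>F k in sequentially. approx_seq k x - sol x = 0" if "0 < x" "x < 3" for x
    using eventually_approx_seq_exact[OF that] by eventually_elim simp
qed

lemma deriv_approx_seq_L2_tendsto: "(\<lambda>k. \<integral>x. (deriv (approx_seq k) x - sol' x)\<^sup>2 \<partial>intv 0 3) \<longlonglongrightarrow> 0"
proof (rule integral_sq_tendsto_0[where K="(2 * step_slope_bound + 1) * error_const"])
  show "(\<lambda>x. deriv (approx_seq k) x - sol' x) \<in> borel_measurable borel" for k
    using test_fun_measurable[OF test_fun_deriv[OF test_fun_approx_seq]] borel_measurable_sol'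
    by (intro borel_measurable_diff) auto
  show "\<bar>deriv (approx_seq k) x - sol' x\<bar> \<le> (2 * step_slope_bound + 1) * error_const" if "0 < x" "x < 3" for k x
    using approx_error_bounded[OF cutoff_width_pos cutoff_width_le that] by (simp add: approx_seq_def)
  show "\<forall>\<^sub>F k in sequentially. deriv (approx_seq k) x - sol' x = 0" if "0 < x" "x < 3" for x
    using eventually_approx_seq_exact[OF that] by eventually_elim simp
qed

lemma H10_sol: "H10 0 3 sol"
  unfolding H10_def using L2_sol L2_sol' weak_deriv_sol test_fun_approx_seq approx_seq_L2_tendsto deriv_approx_seq_L2_tendsto by blast

end


section \<open>The weak formulation\<close>

context explicit_solution
begin

lemma L2_mu_term: "L2 0 3 (\<lambda>x. indicator {1<..<2} x * (sol' x)\<^sup>2)"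
proof (rule L2_bounded)
  show "(\<lambda>x. indicator {1<..<2} x * (sol' x)\<^sup>2) \<in> borel_measurable borel"
    using borel_measurable_sol' by measurable
  have "bounded ((\<lambda>x. indicator {1<..<2} x :: real) ` {0<..<3})"
    by (rule bounded_subset[of "{0, 1}"]) (auto simp: indicator_def)
  then show "bounded ((\<lambda>x. indicator {1<..<2} x * (sol' x)\<^sup>2) ` {0<..<3})"
    unfolding power2_eq_square by (intro bounded_image_mult sol'_bounded)
qed

lemma L2_c_term: "L2 0 3 (\<lambda>x. indicator {2<..<3} x * sol x)"
proof (rule L2_bounded)
  show "(\<lambda>x. indicator {2<..<3} x * sol x) \<in> borel_measurable borel"
    using borel_measurable_sol by measurable
  have "bounded ((\<lambda>x. indicator {2<..<3} x :: real) ` {0<..<3})"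
    by (rule bounded_subset[of "{0, 1}"]) (auto simp: indicator_def)
  then show "bounded ((\<lambda>x. indicator {2<..<3} x * sol x) ` {0<..<3})"
    by (intro bounded_image_mult sol_bounded)
qed

lemma integral_sol''_mult:
  assumes "L2 0 3 \<phi>"
  shows "- (\<integral>x. sol'' x * \<phi> x \<partial>intv 0 3) =
    (\<integral>x. indicator {1<..<2} x * (sol' x)\<^sup>2 * \<phi> x \<partial>intv 0 3) + s\<^sup>2 * (\<integral>x. indicator {2<..<3} x * sol x * \<phi> x \<partial>intv 0 3)"
proof -
  have "- (\<integral>x. sol'' x * \<phi> x \<partial>intv 0 3) =
      (\<integral>x. indicator {1<..<2} x * (sol' x)\<^sup>2 * \<phi> x + s\<^sup>2 * (indicator {2<..<3} x * sol x * \<phi> x) \<partial>intv 0 3)"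
    by (simp add: sol''_def algebra_simps flip: Bochner_Integration.integral_minus)
  also have "\<dots> = (\<integral>x. indicator {1<..<2} x * (sol' x)\<^sup>2 * \<phi> x \<partial>intv 0 3) +
      s\<^sup>2 * (\<integral>x. indicator {2<..<3} x * sol x * \<phi> x \<partial>intv 0 3)"
    using L2_integrable_mult[OF L2_mu_term assms] L2_integrable_mult[OF L2_c_term assms] by simp
  finally show ?thesis .
qed

lemma weak_sol_sol: "weak_sol 0 3 (indicator {1<..<2}) (indicator {2<..<3}) (s\<^sup>2) sol"
  unfolding weak_sol_def
proof (intro conjI H10_sol Linf_sol exI[of _ sol'] weak_deriv_sol L2_sol' allI impI)
  fix \<phi> \<phi>' assume "H10 0 3 \<phi> \<and> Linf 0 3 \<phi> \<and> weak_deriv 0 3 \<phi> \<phi>' \<and> L2 0 3 \<phi>'"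
  then have wd: "weak_deriv 0 3 \<phi> \<phi>'" and L2': "L2 0 3 \<phi>'" and "H10 0 3 \<phi>" by auto
  then obtain g \<psi> where L2: "L2 0 3 \<phi>" and L2g: "L2 0 3 g" and wdg: "weak_deriv 0 3 \<phi> g"
    and \<psi>: "\<And>k. test_fun 0 3 (\<psi> k)"
    and lim: "(\<lambda>k. \<integral>x. (\<psi> k x - \<phi> x)\<^sup>2 \<partial>intv 0 3) \<longlonglongrightarrow> 0"
    and lim': "(\<lambda>k. \<integral>x. (deriv (\<psi> k) x - g x)\<^sup>2 \<partial>intv 0 3) \<longlonglongrightarrow> 0"
    unfolding H10_def by blast
  have "(\<integral>x. sol' x * \<phi>' x \<partial>intv 0 3) = (\<integral>x. sol' x * g x \<partial>intv 0 3)"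
    by (rule weak_deriv_integral_unique[OF wd wdg L2' L2g test_fun_deriv[OF test_fun_approx_seq]
          L2_sol' deriv_approx_seq_L2_tendsto])
  also have "\<dots> = - (\<integral>x. sol'' x * \<phi> x \<partial>intv 0 3)"
    by (rule integral_by_parts_H10[OF weak_deriv_sol' L2_sol' L2_sol'' L2 L2g \<psi> lim lim'])
  also have "\<dots> = (\<integral>x. indicator {1<..<2} x * (sol' x)\<^sup>2 * \<phi> x \<partial>intv 0 3) +
      s\<^sup>2 * (\<integral>x. indicator {2<..<3} x * sol x * \<phi> x \<partial>intv 0 3)"
    by (rule integral_sol''_mult[OF L2])
  finally show "(\<integral>x. sol' x * \<phi>' x \<partial>intv 0 3) =
      (\<integral>x. indicator {1<..<2} x * (sol' x)\<^sup>2 * \<phi> x \<partial>intv 0 3) +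
      s\<^sup>2 * (\<integral>x. indicator {2<..<3} x * sol x * \<phi> x \<partial>intv 0 3)" .
qed

end

section \<open>The family of solutions\<close>

definition kink_ratio :: "real \<Rightarrow> real" where
  "kink_ratio a = a / ((1 + a) * (a + ln (1 + a)))"

definition freq :: "real \<Rightarrow> real" where
  "freq a = (SOME s. pi / 2 \<le> s \<and> s \<le> pi \<and> s * cos s + kink_ratio a * sin s = 0)"

definition amp :: "real \<Rightarrow> real" where
  "amp a = (a + ln (1 + a)) / sin (freq a)"

lemma plus_ln_pos: "1 \<le> a \<Longrightarrow> 0 < a + ln (1 + (a::real))"
  using ln_ge_zero[of "1 + a"] by linarith

lemma kink_ratio_pos: "1 \<le> a \<Longrightarrow> 0 < kink_ratio a"
  using plus_ln_pos[of a] by (simp add: kink_ratio_def)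

lemma kink_ratio_le:
  assumes "1 \<le> a"
  shows "kink_ratio a \<le> 1 / (1 + a)"
proof -
  have "a / (a + ln (1 + a)) \<le> 1" using plus_ln_pos[OF assms] ln_ge_zero[of "1 + a"] assms by simp
  then have "a / (a + ln (1 + a)) / (1 + a) \<le> 1 / (1 + a)"
    using assms by (intro divide_right_mono) auto
  then show ?thesis by (simp add: kink_ratio_def field_simps)
qed

lemma freq:
  assumes "1 \<le> a"
  shows "pi / 2 \<le> freq a" "freq a < pi" "freq a * cos (freq a) + kink_ratio a * sin (freq a) = 0"
proof -
  have "\<exists>s. pi / 2 \<le> s \<and> s \<le> pi \<and> s * cos s + kink_ratio a * sin s = 0"
    using kink_ratio_pos[OF assms]
    by (intro IVT2[where f="\<lambda>s. s * cos s + kink_ratio a * sin s"]) (auto intro!: continuous_intros)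
  then have "pi / 2 \<le> freq a \<and> freq a \<le> pi \<and> freq a * cos (freq a) + kink_ratio a * sin (freq a) = 0"
    unfolding freq_def by (rule someI_ex)
  moreover have "freq a \<noteq> pi" using calculation by auto
  ultimately show "pi / 2 \<le> freq a" "freq a < pi"
    "freq a * cos (freq a) + kink_ratio a * sin (freq a) = 0" by auto
qed

lemma explicit_solution_freq_amp:
  assumes "1 \<le> a"
  shows "explicit_solution a (freq a) (amp a)"
proof
  have "0 < freq a" using freq(1)[OF assms] pi_gt_zero by linarith
  then have sin: "sin (freq a) > 0" using freq(2)[OF assms] by (rule sin_gt_zero)
  show "amp a * sin (freq a) = a + ln (1 + a)" using sin by (simp add: amp_def)
  have "freq a * cos (freq a) = - (kink_ratio a * sin (freq a))"
    using freq(3)[OF assms] by linarith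
  then have "- amp a * freq a * cos (freq a) = amp a * (kink_ratio a * sin (freq a))"
    by (simp add: mult.assoc)
  also have "\<dots> = (a + ln (1 + a)) * (a / ((1 + a) * (a + ln (1 + a))))"
    using sin by (simp add: amp_def kink_ratio_def)
  also have "\<dots> = a / (1 + a)"
    using plus_ln_pos[OF assms]
    by (metis less_irrefl mult.commute nonzero_mult_divide_mult_cancel_right times_divide_eq_right)
  finally show "- amp a * freq a * cos (freq a) = a / (1 + a)" .
qed (use assms freq[OF assms] in auto)

lemma kink_ratio_tendsto_0: "(kink_ratio \<longlongrightarrow> 0) at_top"
proof (rule Lim_null_comparison)
  show "\<forall>\<^sub>F a in at_top. norm (kink_ratio a) \<le> 1 / (1 + a)"
    using eventually_ge_at_top[of "1 :: real"]
    by eventually_elim (use kink_ratio_pos kink_ratio_le in \<open>auto simp: less_imp_le\<close>)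
  have "filterlim (\<lambda>a::real. 1 + a) at_top at_top"
    by (rule filterlim_tendsto_add_at_top[OF tendsto_const filterlim_ident])
  then show "((\<lambda>a::real. 1 / (1 + a)) \<longlongrightarrow> 0) at_top"
    by (rule tendsto_divide_0[OF tendsto_const filterlim_at_top_imp_at_infinity])
qed

lemma abs_cos_freq_le:
  assumes "1 \<le> a"
  shows "\<bar>cos (freq a)\<bar> \<le> kink_ratio a"
proof -
  have s: "1 \<le> freq a" using freq(1)[OF assms] pi_ge_two by linarith
  have r: "0 < kink_ratio a" by (rule kink_ratio_pos[OF assms])
  have "freq a * cos (freq a) = - (kink_ratio a * sin (freq a))"
    using freq(3)[OF assms] by linarith
  then have "\<bar>freq a\<bar> * \<bar>cos (freq a)\<bar> = \<bar>kink_ratio a\<bar> * \<bar>sin (freq a)\<bar>"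
    by (simp only: abs_mult[symmetric] abs_minus_cancel)
  then have "freq a * \<bar>cos (freq a)\<bar> = kink_ratio a * \<bar>sin (freq a)\<bar>"
    using s r by simp
  moreover have "\<bar>cos (freq a)\<bar> \<le> freq a * \<bar>cos (freq a)\<bar>"
    using mult_right_mono[OF s abs_ge_zero] by simp
  moreover have "kink_ratio a * \<bar>sin (freq a)\<bar> \<le> kink_ratio a"
    using r by (simp add: mult_left_le)
  ultimately show ?thesis by linarith
qed

lemma freq_tendsto: "(freq \<longlongrightarrow> pi / 2) at_top"
proof -
  have lim: "((\<lambda>a. cos (freq a)) \<longlongrightarrow> 0) at_top"
  proof (rule Lim_null_comparison[OF _ kink_ratio_tendsto_0])
    show "\<forall>\<^sub>F a in at_top. norm (cos (freq a)) \<le> kink_ratio a"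
      using eventually_ge_at_top[of "1 :: real"] by eventually_elim (simp add: abs_cos_freq_le)
  qed
  have "((\<lambda>a. arccos (cos (freq a))) \<longlongrightarrow> arccos 0) at_top"
    by (rule isCont_tendsto_compose[OF isCont_arccos lim]) auto
  moreover have "\<forall>\<^sub>F a in at_top. arccos (cos (freq a)) = freq a"
    using eventually_ge_at_top[of "1 :: real"]
  proof eventually_elim
    case (elim a)
    have "0 \<le> freq a" "freq a \<le> pi" using freq(1,2)[OF elim] pi_gt_zero by linarith+
    then show ?case by (rule arccos_cos)
  qed
  ultimately show ?thesis by (simp add: tendsto_cong)
qed

lemma Linf_norm_tendsto_infinity:
  assumes "\<And>j. ereal (f j) \<le> Linf_norm a b (u j)" "filterlim f at_top sequentially"
  shows "((\<lambda>j. Linf_norm a b (u j)) \<longlongrightarrow> \<infinity>) sequentially"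
  unfolding tendsto_PInfty
proof
  fix r :: real
  show "\<forall>\<^sub>F j in sequentially. ereal r < Linf_norm a b (u j)"
    using filterlim_at_top_dense[THEN iffD1, OF assms(2), rule_format, of r]
    by eventually_elim (rule less_le_trans[OF _ assms(1)], simp)
qed

theorem theorem2:
  shows "\<exists>(lam :: nat \<Rightarrow> real) (u :: nat \<Rightarrow> real \<Rightarrow> real).
     lam \<longlonglongrightarrow> pi\<^sup>2 / 4 \<and>
     (\<forall>j. H2 0 3 (u j) \<and> H10 0 3 (u j) \<and>
          weak_sol 0 3 (indicator {1<..<2}) (indicator {2<..<3}) (lam j) (u j)) \<and>
     ((\<lambda>j. Linf_norm 0 3 (u j)) \<longlongrightarrow> \<infinity>) sequentially"
proof -
  define a :: "nat \<Rightarrow> real" where "a j = real (Suc j)" for j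
  have a_lim: "filterlim a at_top sequentially"
    unfolding a_def by (rule filterlim_compose[OF filterlim_real_sequentially filterlim_Suc])
  have sol: "explicit_solution (a j) (freq (a j)) (amp (a j))" for j
    by (rule explicit_solution_freq_amp) (simp add: a_def)
  let ?u = "\<lambda>j. explicit_solution.sol (a j) (freq (a j)) (amp (a j))"
  have "(\<lambda>j. (freq (a j))\<^sup>2) \<longlonglongrightarrow> (pi / 2)\<^sup>2"
    by (intro tendsto_power filterlim_compose[OF freq_tendsto a_lim])
  moreover have "H2 0 3 (?u j) \<and> H10 0 3 (?u j) \<and>
      weak_sol 0 3 (indicator {1<..<2}) (indicator {2<..<3}) ((freq (a j))\<^sup>2) (?u j)" for j
    using explicit_solution.H2_sol[OF sol] explicit_solution.H10_sol[OF sol]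
      explicit_solution.weak_sol_sol[OF sol] by blast
  moreover have "((\<lambda>j. Linf_norm 0 3 (?u j)) \<longlongrightarrow> \<infinity>) sequentially"
    by (rule Linf_norm_tendsto_infinity[OF explicit_solution.Linf_norm_sol_ge[OF sol] a_lim])
  ultimately show ?thesis by (intro exI[of _ "\<lambda>j. (freq (a j))\<^sup>2"] exI[of _ ?u]) (simp add: power_divide)
qed

end
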